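(* Let $E:\mathcal{H}\to\mathbb{R}$ be of class $C^2$, and let $P_*\in\mathcal{M}_N$ be a nondegenerate local minimizer of $E$ on $\mathcal{M}_N$, in the sense that there exists $\eta>0$ such that $E(P)\ge E(P_* )+\eta\|P-P_*\|_{\rm F}^2$ for all $P\in\mathcal{M}_N$ in a neighborhood of $P_*$. Let $R:\mathcal{H}\to\mathcal{H}$ be of class $C^2$ such that for all $P\in\mathcal{M}_N$ and all $X\in\mathcal{H}$ small enough, $R(P+X)\in\mathcal{M}_N$ and $R(P+X)=P+\Pi_P(X)+O(X^2)$. Then for $\beta>0$ small enough and $P^0\in\mathcal{M}_N$ close enough to $P_*$, the iterates \[ P^{k+1}:=R\big(P^k-\beta\,\Pi_{P^k}(\nabla E(P^k))\big) \] converge linearly to $P_*$ with asymptotic rate $r(1-\beta J_{\rm grad})<1$, where $J_{\rm grad}:=\Omega_*+K_*$; that is, for every $\theta>0$ there is $C_\theta>0$ such that $\|P^k-P_*\|_{\rm F}\le C_\theta\,(r(1-\beta J_{\rm grad})+\theta)^k\,\|P^0-P_*\|_{\rm F}$ for all $k$, for all such $P^0$.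
   Context: $\mathcal{H}$ is the space of real symmetric $N_b\times N_b$ matrices with the Frobenius inner product $\langle A,B\rangle_{\rm F}=\mathrm{Tr}(AB)$. For $1\le N\le N_b$, $\mathcal{M}_N:=\{P\in\mathcal{H}\mid P^2=P,\ \mathrm{Tr}(P)=N\}$. For $P\in\mathcal{M}_N$, $\Pi_P(X)=PX(1-P)+(1-P)XP$ is the orthogonal projection of $\mathcal{H}$ onto the tangent space $T_P\mathcal{M}_N=\{X\in\mathcal{H}\mid PXP=(1-P)X(1-P)=0\}$. Set $H_*:=\nabla E(P_* )$ and $K_*:=\Pi_{P_*}\nabla^2E(P_* )\Pi_{P_*}$, and define $\Omega_*:T_{P_*}\mathcal{M}_N\to T_{P_*}\mathcal{M}_N$ by $\Omega_*X:=P_*X(1-P_* )H_*-H_*P_*X(1-P_* )+\big(P_*X(1-P_* )H_*-H_*P_*X(1-P_* )\big)^{*}$ (equivalently $\Omega_*X=-[P_*,[H_*,X]]$). $J_{\rm grad}=\Omega_*+K_*$ is regarded as an operator on $T_{P_*}\mathcal{M}_N$, and $r(\cdot)$ denotes the spectral radius of an operator on $T_{P_*}\mathcal{M}_N$. *)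

theory Defs
  imports "HOL-Analysis.Analysis"
begin

text \<open>Matrices are elements of real^'n^'n (N_b = CARD('n)). The Euclidean inner product
 on real^'n^'n is the sum of entrywise products, i.e. the Frobenius inner product
 Tr(A^T B); on symmetric matrices this is Tr(AB). The norm is the Frobenius norm.\<close>

definition Hsym :: "(real^'n^'n) set" where
  "Hsym = {A. transpose A = A}"

definition symm :: "real^'n^'n \<Rightarrow> real^'n^'n" where
  "symm A = (1/2) *\<^sub>R (A + transpose A)"

definition MN :: "nat \<Rightarrow> (real^'n^'n) set" where
  "MN N = {P. P \<in> Hsym \<and> P ** P = P \<and> trace P = real N}"

definition PiP :: "real^'n^'n \<Rightarrow> real^'n^'n \<Rightarrow> real^'n^'n" where
  "PiP P X = P ** X ** (mat 1 - P) + (mat 1 - P) ** X ** P"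

definition tangent :: "real^'n^'n \<Rightarrow> (real^'n^'n) set" where
  "tangent P = {X. X \<in> Hsym \<and> P ** X ** P = 0 \<and> (mat 1 - P) ** X ** (mat 1 - P) = 0}"

definition C2 :: "('a::real_normed_vector \<Rightarrow> 'b::real_normed_vector) \<Rightarrow> bool" where
  "C2 f \<longleftrightarrow> (\<exists>f' f''.
      (\<forall>x. (f has_derivative blinfun_apply (f' x)) (at x)) \<and>
      (\<forall>x. (f' has_derivative blinfun_apply (f'' x)) (at x)) \<and>
      continuous_on UNIV f'')"

text \<open>Gradient of E on all matrices (Riesz representative of the Frechet derivative),
 and the gradient on H (its orthogonal projection onto symmetric matrices).\<close>
definition full_grad :: "(real^'n^'n \<Rightarrow> real) \<Rightarrow> real^'n^'n \<Rightarrow> real^'n^'n" where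
  "full_grad E P = (\<Sum>b\<in>Basis. frechet_derivative E (at P) b *\<^sub>R b)"

definition gradH :: "(real^'n^'n \<Rightarrow> real) \<Rightarrow> real^'n^'n \<Rightarrow> real^'n^'n" where
  "gradH E P = symm (full_grad E P)"

definition hessH :: "(real^'n^'n \<Rightarrow> real) \<Rightarrow> real^'n^'n \<Rightarrow> real^'n^'n \<Rightarrow> real^'n^'n" where
  "hessH E P = frechet_derivative (gradH E) (at P)"

definition Omega :: "real^'n^'n \<Rightarrow> real^'n^'n \<Rightarrow> real^'n^'n \<Rightarrow> real^'n^'n" where
  "Omega Ps Hs X =
     (let Y = Ps ** X ** (mat 1 - Ps) ** Hs - Hs ** Ps ** X ** (mat 1 - Ps)
      in Y + transpose Y)"

definition Kop :: "(real^'n^'n \<Rightarrow> real) \<Rightarrow> real^'n^'n \<Rightarrow> real^'n^'n \<Rightarrow> real^'n^'n" where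
  "Kop E Ps X = PiP Ps (hessH E Ps (PiP Ps X))"

definition Jgrad :: "(real^'n^'n \<Rightarrow> real) \<Rightarrow> real^'n^'n \<Rightarrow> real^'n^'n \<Rightarrow> real^'n^'n" where
  "Jgrad E Ps X = Omega Ps (gradH E Ps) X + Kop E Ps X"

text \<open>Complex spectrum of a real linear operator L on a real subspace T:
 eigenvalues of the complexification, i.e. lambda = a + ib with L(u+iv) = lambda (u+iv),
 u, v in T not both zero.\<close>
definition cspec :: "'a::real_vector set \<Rightarrow> ('a \<Rightarrow> 'a) \<Rightarrow> complex set" where
  "cspec T L = {z. \<exists>u v. u \<in> T \<and> v \<in> T \<and> (u \<noteq> 0 \<or> v \<noteq> 0) \<and>
       L u = Re z *\<^sub>R u - Im z *\<^sub>R v \<and> L v = Im z *\<^sub>R u + Re z *\<^sub>R v}"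

definition spec_radius :: "'a::real_vector set \<Rightarrow> ('a \<Rightarrow> 'a) \<Rightarrow> real" where
  "spec_radius T L = (if cspec T L = {} then 0 else Sup (cmod ` cspec T L))"

end

theory Submission
  imports Defs
begin

text \<open>Testing \<open>E\<close> along the curves \<open>t \<mapsto> R (Ps + t X)\<close>, \<open>X\<close> tangent at \<open>Ps\<close>, which leave
  \<open>Ps\<close> with velocity \<open>X\<close>, the minimality of \<open>Ps\<close> gives the first-order condition
  \<open>\<Pi>\<^sub>P\<^sub>s H\<^sub>* = 0\<close>, i.e. \<open>H\<^sub>*\<close> commutes with \<open>Ps\<close>, and its nondegeneracy gives
  \<open>\<langle>J X, X\<rangle> \<ge> 2\<eta>|X|\<^sup>2\<close> on the tangent space: there \<open>\<langle>J X, X\<rangle>\<close> is twice the Hessian of \<open>E\<close> plus the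
  curvature term \<open>\<langle>H\<^sub>*, (1 - Ps) X\<^sup>2 (1 - Ps) - Ps X\<^sup>2 Ps\<rangle>\<close>, which is what the gradient contributes
  through the normal part of a secant of the manifold. By Schwarz's theorem and the commutation,
  \<open>J\<close> is self-adjoint on the tangent space, so for \<open>\<beta> \<parallel>J\<parallel> < 1\<close> the spectrum of \<open>1 - \<beta> J\<close> lies in
  \<open>(0, 1 - 2\<beta>\<eta>]\<close> and its norm there equals its spectral radius \<open>r < 1\<close>. On the tangent space the
  derivative at \<open>Ps\<close> of \<open>P \<mapsto> \<Pi>\<^sub>P \<nabla>E(P)\<close> is \<open>J\<close>, while secants of the manifold leave the tangent
  space only to second order; hence one step of the iteration contracts the distance to \<open>Ps\<close> by
  \<open>r + \<theta>\<close> near \<open>Ps\<close>, and the estimate follows by iteration.\<close>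

lemma transpose_add: "transpose (A + B) = transpose A + transpose (B::real^'n^'m)"
  by (simp add: transpose_def vec_eq_iff)

lemma transpose_diff: "transpose (A - B) = transpose A - transpose (B::real^'n^'m)"
  by (simp add: transpose_def vec_eq_iff)

lemma transpose_uminus: "transpose (- A) = - transpose (A::real^'n^'m)"
  by (simp add: transpose_def vec_eq_iff)

lemma transpose_zero [simp]: "transpose (0::real^'n^'m) = 0"
  by (simp add: transpose_def vec_eq_iff)

lemma matrix_add_rdistrib: "(A + B) ** C = A ** C + B ** (C::real^'n^'n)"
  by (simp add: matrix_matrix_mult_def vec_eq_iff sum.distrib distrib_right)

lemma matrix_diff_ldistrib: "A ** (B - C) = A ** B - A ** (C::real^'n^'n)"
  by (simp add: matrix_matrix_mult_def vec_eq_iff sum_subtractf right_diff_distrib)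

lemma matrix_diff_rdistrib: "(A - B) ** C = A ** C - B ** (C::real^'n^'n)"
  by (simp add: matrix_matrix_mult_def vec_eq_iff sum_subtractf left_diff_distrib)

lemma matrix_neg_left: "(- A) ** C = - (A ** (C::real^'n^'n))"
  by (simp add: matrix_matrix_mult_def vec_eq_iff sum_negf)

lemma matrix_neg_right: "A ** (- C) = - (A ** (C::real^'n^'n))"
  by (simp add: matrix_matrix_mult_def vec_eq_iff sum_negf)

lemma matrix_scaleR_left: "(c *\<^sub>R A) ** C = c *\<^sub>R (A ** (C::real^'n^'n))"
  by (rule scalar_matrix_assoc[symmetric])

lemma matrix_scaleR_right: "A ** (c *\<^sub>R C) = c *\<^sub>R (A ** (C::real^'n^'n))"
  by (simp add: matrix_matrix_mult_def vec_eq_iff sum_distrib_left mult_ac)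

text \<open>On \<open>real^'n^'n\<close> the product \<open>*\<close> is entrywise, and normalizing with \<open>algebra_simps\<close> turns
  \<open>X + X\<close> into \<open>2 * X\<close>; these rules move such numerals through matrix products.\<close>

lemma matrix_mult_numeral_left [simp]: "(numeral k * A) ** B = numeral k * (A ** (B::real^'n^'n))"
  by (simp add: matrix_matrix_mult_def vec_eq_iff sum_distrib_left mult.assoc)

lemma matrix_mult_numeral_right [simp]: "A ** (numeral k * B) = numeral k * (A ** (B::real^'n^'n))"
  by (simp add: matrix_matrix_mult_def vec_eq_iff sum_distrib_left mult.left_commute)

lemma transpose_numeral [simp]: "transpose (numeral k * A) = numeral k * transpose (A::real^'n^'n)"
  by (simp add: transpose_def vec_eq_iff)

lemmas matrix_mult_simps = matrix_add_ldistrib matrix_add_rdistrib matrix_diff_ldistrib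
  matrix_diff_rdistrib matrix_neg_left matrix_neg_right matrix_scaleR_left matrix_scaleR_right
  matrix_mul_assoc

lemma matrix_mult_assoc_eq: "A ** B = C \<Longrightarrow> Z ** A ** B = Z ** (C::real^'n^'n)"
  by (metis matrix_mul_assoc)

lemma matrix_mult_assoc_zero: "A ** B = 0 \<Longrightarrow> Z ** A ** B = (0::real^'n^'n)"
  by (metis matrix_mul_assoc times0_right)

lemma matrix_mult_assoc_zero3: "A ** B ** C = 0 \<Longrightarrow> Z ** A ** B ** C = (0::real^'n^'n)"
  by (metis matrix_mul_assoc times0_right)

lemma bounded_bilinear_matrix_mult: "bounded_bilinear (\<lambda>A B::real^'n^'n. A ** B)"
proof -
  have "bilinear (\<lambda>A B::real^'n^'n. A ** B)"
    unfolding bilinear_def linear_iff by (simp add: matrix_mult_simps)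
  then show ?thesis using bilinear_conv_bounded_bilinear by blast
qed

lemma has_derivative_matrix_mult:
  fixes u v :: "real^'n^'n \<Rightarrow> real^'n^'n"
  assumes "(u has_derivative u') (at x)" "(v has_derivative v') (at x)"
  shows "((\<lambda>x. u x ** v x) has_derivative (\<lambda>h. u x ** v' h + u' h ** v x)) (at x)"
  using bounded_bilinear.FDERIV[OF bounded_bilinear_matrix_mult assms] by simp

lemma inner_matrix_eq_sum: "inner (A::real^'n^'m) B = (\<Sum>i\<in>UNIV. \<Sum>j\<in>UNIV. A$i$j * B$i$j)"
  by (simp add: inner_vec_def)

lemma inner_transpose: "inner (transpose A) (transpose B) = inner (A::real^'n^'n) B"
proof -
  have "inner (transpose A) (transpose B) = (\<Sum>i\<in>UNIV. \<Sum>j\<in>UNIV. A$j$i * B$j$i)"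
    unfolding inner_matrix_eq_sum transpose_def by simp
  also have "\<dots> = inner A B" unfolding inner_matrix_eq_sum by (rule sum.swap)
  finally show ?thesis .
qed

lemma inner_matrix_mult_left:
  "inner (A ** B) (C::real^'n^'n) = inner (B::real^'n^'n) (transpose A ** C)"
proof -
  have "inner (A ** B) C = (\<Sum>i\<in>UNIV. \<Sum>j\<in>UNIV. \<Sum>k\<in>UNIV. A$i$k * B$k$j * C$i$j)"
    by (simp add: inner_matrix_eq_sum matrix_matrix_mult_def sum_distrib_right)
  also have "\<dots> = (\<Sum>i\<in>UNIV. \<Sum>k\<in>UNIV. \<Sum>j\<in>UNIV. A$i$k * B$k$j * C$i$j)"
    by (rule sum.cong[OF refl], rule sum.swap)
  also have "\<dots> = (\<Sum>k\<in>UNIV. \<Sum>i\<in>UNIV. \<Sum>j\<in>UNIV. A$i$k * B$k$j * C$i$j)"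
    by (rule sum.swap)
  also have "\<dots> = (\<Sum>k\<in>UNIV. \<Sum>j\<in>UNIV. \<Sum>i\<in>UNIV. A$i$k * B$k$j * C$i$j)"
    by (rule sum.cong[OF refl], rule sum.swap)
  also have "\<dots> = inner B (transpose A ** C)"
    unfolding inner_matrix_eq_sum matrix_matrix_mult_def transpose_def
    by (simp add: sum_distrib_left algebra_simps)
  finally show ?thesis .
qed

lemma inner_matrix_mult_right:
  "inner (A ** B) (C::real^'n^'n) = inner (A::real^'n^'n) (C ** transpose B)"
proof -
  have "inner (A ** B) C = inner (transpose B ** transpose A) (transpose C)"
    using inner_transpose[of "A ** B" C] by (simp only: matrix_transpose_mul)
  also have "\<dots> = inner (transpose A) (transpose (C ** transpose B))"
    by (simp only: inner_matrix_mult_left matrix_transpose_mul transpose_transpose)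
  finally show ?thesis by (simp only: inner_transpose)
qed

lemma inner_matrix_sandwich:
  fixes X A Y B :: "real^'n^'n"
  shows "inner (X ** A ** Y) B = inner A (transpose X ** B ** transpose Y)"
  using inner_matrix_mult_right[of "X ** A" Y B] inner_matrix_mult_left[of X A "B ** transpose Y"]
  by (simp add: matrix_mul_assoc)

section \<open>Orthogonal projection onto the tangent space\<close>

lemma idempotent_complement:
  fixes P :: "real^'n^'n"
  assumes "P ** P = P"
  shows "(mat 1 - P) ** (mat 1 - P) = mat 1 - P" "P ** (mat 1 - P) = 0" "(mat 1 - P) ** P = 0"
  using assms by (simp_all add: matrix_mult_simps)

lemma idempotent_mult_assoc: "P ** P = P \<Longrightarrow> Z ** P ** P = Z ** (P::real^'n^'n)"
  by (metis matrix_mul_assoc)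

lemma PiP_expand: "PiP P X = P ** X - P ** X ** P + X ** P - P ** X ** P"
  unfolding PiP_def by (simp add: matrix_mult_simps algebra_simps)

lemma bounded_linear_PiP: "bounded_linear (PiP (P::real^'n^'n))"
  by (rule bounded_linearI') (simp_all add: PiP_def matrix_mult_simps algebra_simps)

lemma PiP_PiP:
  fixes P :: "real^'n^'n"
  assumes "P ** P = P"
  shows "PiP P (PiP P X) = PiP P X"
  using assms by (simp add: PiP_expand matrix_mult_simps algebra_simps idempotent_mult_assoc[OF assms])

lemma transpose_PiP:
  fixes P :: "real^'n^'n"
  assumes "transpose P = P" "transpose X = X"
  shows "transpose (PiP P X) = PiP P X"
  using assms
  by (simp add: PiP_expand transpose_add transpose_diff matrix_transpose_mul matrix_mult_simps
      algebra_simps)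

lemma inner_PiP_left:
  fixes P :: "real^'n^'n"
  assumes "transpose P = P"
  shows "inner (PiP P A) B = inner A (PiP P B)"
  unfolding PiP_def
  by (simp add: inner_add_left inner_add_right inner_matrix_sandwich assms transpose_diff)

lemma norm_PiP_le:
  fixes P :: "real^'n^'n"
  assumes "transpose P = P" "P ** P = P"
  shows "norm (PiP P X) \<le> norm X"
proof -
  have "(norm (PiP P X))\<^sup>2 = inner X (PiP P X)"
    by (simp add: power2_norm_eq_inner inner_PiP_left[OF assms(1)] PiP_PiP[OF assms(2)])
  also have "\<dots> \<le> norm X * norm (PiP P X)" by (rule norm_cauchy_schwarz)
  finally have "norm (PiP P X) * norm (PiP P X) \<le> norm X * norm (PiP P X)"
    by (simp add: power2_eq_square)
  then show ?thesis by (cases "PiP P X = 0") (simp_all add: mult_le_cancel_right)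
qed

lemma subspace_tangent: "subspace (tangent (P::real^'n^'n))"
  unfolding subspace_def
proof (intro conjI ballI allI)
  show "0 \<in> tangent P" unfolding tangent_def Hsym_def by simp
next
  fix X Y assume "X \<in> tangent P" "Y \<in> tangent P"
  then show "X + Y \<in> tangent P" unfolding tangent_def Hsym_def
    by (simp add: matrix_add_ldistrib matrix_add_rdistrib transpose_add)
next
  fix c :: real and X assume "X \<in> tangent P"
  then show "c *\<^sub>R X \<in> tangent P" unfolding tangent_def Hsym_def
    by (simp add: matrix_scaleR_left matrix_scaleR_right transpose_scalar)
qed

lemma tangent_transpose: "X \<in> tangent P \<Longrightarrow> transpose X = X"
  unfolding tangent_def Hsym_def by auto

lemma PiP_in_tangent:
  fixes P :: "real^'n^'n"
  assumes "transpose P = P" "P ** P = P" "transpose X = X"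
  shows "PiP P X \<in> tangent P"
  unfolding tangent_def Hsym_def
  using transpose_PiP[OF assms(1,3)] assms(2)
  by (simp add: PiP_expand matrix_mult_simps algebra_simps idempotent_mult_assoc[OF assms(2)])

lemma tangent_block_decomposition:
  fixes P X :: "real^'n^'n"
  assumes X: "X \<in> tangent P"
  shows "P ** X = P ** X ** (mat 1 - P)" "X ** P = (mat 1 - P) ** X ** P"
    "(mat 1 - P) ** X = (mat 1 - P) ** X ** P" "X ** (mat 1 - P) = P ** X ** (mat 1 - P)"
    "X = P ** X ** (mat 1 - P) + (mat 1 - P) ** X ** P"
proof -
  have a: "P ** X ** P = 0" "(mat 1 - P) ** X ** (mat 1 - P) = 0"
    using X unfolding tangent_def by auto
  have "P ** X = P ** X ** (P + (mat 1 - P))" by simp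
  also have "\<dots> = P ** X ** (mat 1 - P)" using a(1) by (simp only: matrix_add_ldistrib) simp
  finally show 1: "P ** X = P ** X ** (mat 1 - P)" .
  have "X ** P = (P + (mat 1 - P)) ** X ** P" by simp
  also have "\<dots> = (mat 1 - P) ** X ** P" using a(1) by (simp only: matrix_add_rdistrib) simp
  finally show "X ** P = (mat 1 - P) ** X ** P" .
  have "(mat 1 - P) ** X = (mat 1 - P) ** X ** (P + (mat 1 - P))" by simp
  also have "\<dots> = (mat 1 - P) ** X ** P" using a(2) by (simp only: matrix_add_ldistrib) simp
  finally show 3: "(mat 1 - P) ** X = (mat 1 - P) ** X ** P" .
  have "X ** (mat 1 - P) = (P + (mat 1 - P)) ** X ** (mat 1 - P)" by simp
  also have "\<dots> = P ** X ** (mat 1 - P)" using a(2) by (simp only: matrix_add_rdistrib) simp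
  finally show "X ** (mat 1 - P) = P ** X ** (mat 1 - P)" .
  have "X = (P + (mat 1 - P)) ** X" by simp
  then show "X = P ** X ** (mat 1 - P) + (mat 1 - P) ** X ** P"
    using 1 3 by (simp only: matrix_add_rdistrib)
qed

lemma PiP_tangent:
  fixes P :: "real^'n^'n"
  assumes "X \<in> tangent P"
  shows "PiP P X = X"
  using tangent_block_decomposition(5)[OF assms] unfolding PiP_def by simp

lemma PiP_eq_0_imp_commute:
  fixes P H :: "real^'n^'n"
  assumes P: "P ** P = P" and "PiP P H = 0"
  shows "H ** P = P ** H"
proof -
  have PiP: "P ** H - P ** H ** P + H ** P - P ** H ** P = 0"
    using assms(2) unfolding PiP_expand .
  have "P ** (P ** H - P ** H ** P + H ** P - P ** H ** P) = P ** H - P ** H ** P"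
    by (simp add: matrix_mult_simps P idempotent_mult_assoc)
  then have 1: "P ** H = P ** H ** P" using PiP by simp
  have "(P ** H - P ** H ** P + H ** P - P ** H ** P) ** P = H ** P - P ** H ** P"
    by (simp add: matrix_mult_simps P idempotent_mult_assoc[OF P])
  then have "H ** P = P ** H ** P" using PiP by simp
  then show ?thesis using 1 by simp
qed

text \<open>On the manifold the secant \<open>P' - P\<close> leaves the tangent space at \<open>P\<close> only to second order.\<close>

lemma idempotent_secant_normal_part:
  fixes P P' :: "real^'n^'n"
  assumes "P ** P = P" "P' ** P' = P'"
  shows "(P' - P) - PiP P (P' - P) =
     (mat 1 - P) ** ((P' - P) ** (P' - P)) ** (mat 1 - P) - P ** ((P' - P) ** (P' - P)) ** P"
proof -
  define D where "D = P' - P"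
  have P': "P' = P + D" unfolding D_def by simp
  have e: "P ** D + D ** P + D ** D = D"
    using assms(2) unfolding P' by (simp add: matrix_mult_simps assms(1) algebra_simps)
  have e1: "P ** D ** P = - (P ** (D ** D) ** P)"
  proof -
    have "P ** (P ** D + D ** P + D ** D) ** P = P ** D ** P" using e by simp
    then show ?thesis
      by (simp add: matrix_mult_simps algebra_simps assms(1) idempotent_mult_assoc[OF assms(1)]
          eq_neg_iff_add_eq_0)
  qed
  have e2: "(mat 1 - P) ** D ** (mat 1 - P) = (mat 1 - P) ** (D ** D) ** (mat 1 - P)"
  proof -
    have "(mat 1 - P) ** (P ** D + D ** P + D ** D) ** (mat 1 - P) = (mat 1 - P) ** D ** (mat 1 - P)"
      using e by simp
    then show ?thesis
      by (simp add: matrix_mult_simps algebra_simps assms(1) idempotent_mult_assoc[OF assms(1)]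
          eq_neg_iff_add_eq_0)
  qed
  have "D - PiP P D = P ** D ** P + (mat 1 - P) ** D ** (mat 1 - P)"
    by (simp add: PiP_expand matrix_mult_simps algebra_simps)
  then show ?thesis unfolding D_def[symmetric] using e1 e2 by simp
qed

lemma transpose_symm: "transpose (symm A) = symm (A::real^'n^'n)"
  by (simp add: symm_def transpose_scalar transpose_add add.commute)

lemma inner_symm:
  fixes A Y :: "real^'n^'n"
  assumes "transpose Y = Y"
  shows "inner (symm A) Y = inner A Y"
proof -
  have "inner (transpose A) Y = inner A Y"
    using inner_transpose[of A Y] assms by simp
  then show ?thesis by (simp add: symm_def inner_add_left)
qed

lemma bounded_linear_symm: "bounded_linear (symm :: real^'n^'n \<Rightarrow> _)"
  by (rule bounded_linearI') (auto simp: symm_def transpose_add transpose_scalar algebra_simps)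

lemma inner_sum_Basis_blinfun: "inner (\<Sum>b\<in>Basis. blinfun_apply L b *\<^sub>R b) Y = blinfun_apply L Y"
proof -
  have "inner (\<Sum>b\<in>Basis. blinfun_apply L b *\<^sub>R b) Y = (\<Sum>b\<in>Basis. blinfun_apply L b * inner b Y)"
    by (simp add: inner_sum_left)
  also have "\<dots> = blinfun_apply L (\<Sum>b\<in>Basis. inner Y b *\<^sub>R b)"
    by (simp add: blinfun.sum_right blinfun.scaleR_right inner_commute mult.commute)
  finally show ?thesis by (simp add: euclidean_representation)
qed

lemma full_grad_eq:
  assumes "(E has_derivative blinfun_apply (f' x)) (at x)"
  shows "full_grad E x = (\<Sum>b\<in>Basis. blinfun_apply (f' x) b *\<^sub>R b)"
  unfolding full_grad_def using frechet_derivative_at[OF assms] by simp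

lemma transpose_gradH: "transpose (gradH E x) = gradH E x"
  unfolding gradH_def by (rule transpose_symm)

lemma inner_gradH:
  fixes E :: "real^'n^'n \<Rightarrow> real"
  assumes "(E has_derivative blinfun_apply (f' x)) (at x)" "transpose Y = Y"
  shows "inner (gradH E x) Y = blinfun_apply (f' x) Y"
  unfolding gradH_def full_grad_eq[of E f' x, OF assms(1)] inner_symm[OF assms(2)]
  by (rule inner_sum_Basis_blinfun)

lemma has_derivative_gradH:
  fixes E :: "real^'n^'n \<Rightarrow> real"
  assumes d1: "\<And>x. (E has_derivative blinfun_apply (f' x)) (at x)"
    and d2: "(f' has_derivative blinfun_apply (f'' x)) (at x)"
  shows "(gradH E has_derivative
           (\<lambda>A. symm (\<Sum>b\<in>Basis. blinfun_apply (blinfun_apply (f'' x) A) b *\<^sub>R b))) (at x)"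
proof -
  have "gradH E = (\<lambda>x. symm (\<Sum>b\<in>Basis. blinfun_apply (f' x) b *\<^sub>R b))"
    unfolding gradH_def[abs_def] using full_grad_eq[of E f', OF d1] by simp
  moreover have "((\<lambda>x. blinfun_apply (f' x) b) has_derivative
      (\<lambda>h. blinfun_apply (blinfun_apply (f'' x) h) b)) (at x)" for b
    using bounded_linear.has_derivative[OF blinfun.bounded_linear_left d2] by simp
  ultimately show ?thesis
    by (simp only:) (intro bounded_linear.has_derivative[OF bounded_linear_symm]
        has_derivative_sum has_derivative_scaleR_left)
qed

lemma hessH_eq:
  fixes E :: "real^'n^'n \<Rightarrow> real"
  assumes "\<And>x. (E has_derivative blinfun_apply (f' x)) (at x)"
    and "(f' has_derivative blinfun_apply (f'' x)) (at x)"
  shows "hessH E x = (\<lambda>A. symm (\<Sum>b\<in>Basis. blinfun_apply (blinfun_apply (f'' x) A) b *\<^sub>R b))"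
  unfolding hessH_def using frechet_derivative_at[OF has_derivative_gradH[of E f' f'' x, OF assms]] by simp

lemma inner_hessH:
  fixes E :: "real^'n^'n \<Rightarrow> real"
  assumes "\<And>x. (E has_derivative blinfun_apply (f' x)) (at x)"
    and "(f' has_derivative blinfun_apply (f'' x)) (at x)"
    and "transpose Y = Y"
  shows "inner (hessH E x A) Y = blinfun_apply (blinfun_apply (f'' x) A) Y"
  unfolding hessH_eq[of E f' f'' x, OF assms(1,2)] inner_symm[OF assms(3)] by (rule inner_sum_Basis_blinfun)

section \<open>Second-order calculus\<close>

lemma has_real_derivative_along_line:
  fixes g :: "'a::real_normed_vector \<Rightarrow> real"
  assumes "\<And>x. (g has_derivative g' x) (at x)"
  shows "((\<lambda>s. g (x0 + s *\<^sub>R A)) has_real_derivative g' (x0 + s *\<^sub>R A) A) (at s)"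
proof -
  have l: "bounded_linear (g' (x0 + s *\<^sub>R A))" using assms has_derivative_bounded_linear by blast
  have "((\<lambda>s. x0 + s *\<^sub>R A) has_derivative (\<lambda>h. h *\<^sub>R A)) (at s)"
    by (auto intro!: derivative_eq_intros)
  from diff_chain_at[OF this assms[of "x0 + s *\<^sub>R A"]]
  have "((\<lambda>s. g (x0 + s *\<^sub>R A)) has_derivative (\<lambda>h. g' (x0 + s *\<^sub>R A) (h *\<^sub>R A))) (at s)"
    by (simp add: o_def)
  then show ?thesis
    by (rule has_derivative_imp_has_field_derivative) (simp add: linear_simps(5)[OF l] mult.commute)
qed

lemma has_real_derivative_along_line_blinfun:
  fixes f' :: "'a::real_normed_vector \<Rightarrow> 'a \<Rightarrow>\<^sub>L real"
  assumes "\<And>x. (f' has_derivative blinfun_apply (f'' x)) (at x)"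
  shows "((\<lambda>s. blinfun_apply (f' (x0 + s *\<^sub>R A)) B) has_real_derivative
           blinfun_apply (blinfun_apply (f'' (x0 + s *\<^sub>R A)) A) B) (at s)"
  by (rule has_real_derivative_along_line[where g' = "\<lambda>x h. blinfun_apply (blinfun_apply (f'' x) h) B"])
     (use bounded_linear.has_derivative[OF blinfun.bounded_linear_left assms] in simp)

lemma abs_blinfun_apply2_le:
  "\<bar>blinfun_apply (blinfun_apply A X) Y\<bar> \<le> norm A * norm X * norm Y"
proof -
  have "\<bar>blinfun_apply (blinfun_apply A X) Y\<bar> \<le> norm (blinfun_apply A X) * norm Y"
    using norm_blinfun[of "blinfun_apply A X" Y] by simp
  also have "\<dots> \<le> norm A * norm X * norm Y" by (intro mult_right_mono norm_blinfun) auto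
  finally show ?thesis .
qed

lemma second_difference_mvt:
  fixes E :: "'a::real_normed_vector \<Rightarrow> real"
  assumes d1: "\<And>x. (E has_derivative blinfun_apply (f' x)) (at x)"
    and d2: "\<And>x. (f' has_derivative blinfun_apply (f'' x)) (at x)"
    and t: "t > 0"
  shows "\<exists>\<xi>. norm (\<xi> - P) \<le> t * (norm A + norm B) \<and>
    E (P + t *\<^sub>R A + t *\<^sub>R B) - E (P + t *\<^sub>R A) - E (P + t *\<^sub>R B) + E P
      = t\<^sup>2 * blinfun_apply (blinfun_apply (f'' \<xi>) B) A"
proof -
  define h where "h s = E ((P + t *\<^sub>R B) + s *\<^sub>R A) - E (P + s *\<^sub>R A)" for s
  have "(h has_real_derivative (blinfun_apply (f' ((P + t *\<^sub>R B) + s *\<^sub>R A)) A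
      - blinfun_apply (f' (P + s *\<^sub>R A)) A)) (at s)" for s
    unfolding h_def[abs_def]
    by (intro DERIV_diff has_real_derivative_along_line[where g' = "\<lambda>x. blinfun_apply (f' x)"] d1)
  from MVT2[OF t this] obtain s1 where s1: "0 < s1" "s1 < t"
    and hm: "h t - h 0 = t * (blinfun_apply (f' ((P + s1 *\<^sub>R A) + t *\<^sub>R B)) A
      - blinfun_apply (f' ((P + s1 *\<^sub>R A) + 0 *\<^sub>R B)) A)"
    by (auto simp: algebra_simps)
  from MVT2[OF t has_real_derivative_along_line_blinfun[OF d2, of "P + s1 *\<^sub>R A" B A]]
  obtain \<tau>1 where t1: "0 < \<tau>1" "\<tau>1 < t" and km:
    "blinfun_apply (f' ((P + s1 *\<^sub>R A) + t *\<^sub>R B)) A - blinfun_apply (f' ((P + s1 *\<^sub>R A) + 0 *\<^sub>R B)) A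
      = t * blinfun_apply (blinfun_apply (f'' ((P + s1 *\<^sub>R A) + \<tau>1 *\<^sub>R B)) B) A"
    by auto
  define \<xi> where "\<xi> = (P + s1 *\<^sub>R A) + \<tau>1 *\<^sub>R B"
  have "norm (\<xi> - P) \<le> norm (s1 *\<^sub>R A) + norm (\<tau>1 *\<^sub>R B)"
    unfolding \<xi>_def using norm_triangle_ineq[of "s1 *\<^sub>R A" "\<tau>1 *\<^sub>R B"] by (simp add: algebra_simps)
  also have "\<dots> \<le> t * norm A + t * norm B"
    using s1 t1 by (auto intro!: add_mono mult_right_mono)
  finally have "norm (\<xi> - P) \<le> t * (norm A + norm B)" by (simp add: algebra_simps)
  moreover have "h t - h 0 = E (P + t *\<^sub>R A + t *\<^sub>R B) - E (P + t *\<^sub>R A) - E (P + t *\<^sub>R B) + E P"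
    unfolding h_def by (simp add: algebra_simps)
  then have "E (P + t *\<^sub>R A + t *\<^sub>R B) - E (P + t *\<^sub>R A) - E (P + t *\<^sub>R B) + E P
      = t\<^sup>2 * blinfun_apply (blinfun_apply (f'' \<xi>) B) A"
    using hm km unfolding \<xi>_def by (simp add: power2_eq_square)
  ultimately show ?thesis by blast
qed

text \<open>Schwarz's theorem: the normalized second difference converges to \<open>f'' P B A\<close>, and it is
  symmetric in \<open>A\<close> and \<open>B\<close>.\<close>

lemma second_derivative_symmetric:
  fixes E :: "'a::real_normed_vector \<Rightarrow> real"
  assumes d1: "\<And>x. (E has_derivative blinfun_apply (f' x)) (at x)"
    and d2: "\<And>x. (f' has_derivative blinfun_apply (f'' x)) (at x)"
    and cont: "isCont f'' P"
  shows "blinfun_apply (blinfun_apply (f'' P) A) B = blinfun_apply (blinfun_apply (f'' P) B) A"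
proof -
  define \<Delta> where "\<Delta> A B t = (E (P + t *\<^sub>R A + t *\<^sub>R B) - E (P + t *\<^sub>R A) - E (P + t *\<^sub>R B) + E P) / t\<^sup>2"
    for A B t
  have lim: "(\<Delta> A B \<longlongrightarrow> blinfun_apply (blinfun_apply (f'' P) B) A) (at_right 0)" for A B
  proof -
    have "\<exists>\<xi>. t > 0 \<longrightarrow> norm (\<xi> - P) \<le> t * (norm A + norm B) \<and>
        \<Delta> A B t = blinfun_apply (blinfun_apply (f'' \<xi>) B) A" for t
    proof (cases "t > 0")
      case True
      from second_difference_mvt[OF d1 d2 True] obtain \<xi> where
        "norm (\<xi> - P) \<le> t * (norm A + norm B)"
        "E (P + t *\<^sub>R A + t *\<^sub>R B) - E (P + t *\<^sub>R A) - E (P + t *\<^sub>R B) + E P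
           = t\<^sup>2 * blinfun_apply (blinfun_apply (f'' \<xi>) B) A"
        by blast
      then show ?thesis using True unfolding \<Delta>_def by auto
    qed simp
    then obtain \<xi> where \<xi>: "\<And>t. t > 0 \<Longrightarrow> norm (\<xi> t - P) \<le> t * (norm A + norm B) \<and>
        \<Delta> A B t = blinfun_apply (blinfun_apply (f'' (\<xi> t)) B) A"
      by metis
    have "((\<lambda>t. t * (norm A + norm B)) \<longlongrightarrow> 0) (at_right 0)"
      by (auto intro!: tendsto_eq_intros)
    then have "((\<lambda>t. \<xi> t - P) \<longlongrightarrow> 0) (at_right 0)"
      by (rule Lim_null_comparison[rotated])
         (use eventually_at_right_less[of 0] in \<open>eventually_elim, use \<xi> in auto\<close>)
    then have "(\<xi> \<longlongrightarrow> P) (at_right 0)" by (simp add: LIM_zero_iff)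
    then have "((\<lambda>t. blinfun_apply (blinfun_apply (f'' (\<xi> t)) B) A) \<longlongrightarrow>
        blinfun_apply (blinfun_apply (f'' P) B) A) (at_right 0)"
      by (intro blinfun.tendsto tendsto_const isCont_tendsto_compose[OF cont])
    then show ?thesis
      by (rule Lim_transform_eventually)
         (use eventually_at_right_less[of 0] in \<open>eventually_elim, use \<xi> in auto\<close>)
  qed
  have "\<Delta> A B = \<Delta> B A" unfolding \<Delta>_def by (simp add: add_ac diff_diff_eq)
  with lim[of A B] lim[of B A] show ?thesis
    by (metis tendsto_unique trivial_limit_at_right_real)
qed

lemma taylor_second_order:
  fixes E :: "'a::real_normed_vector \<Rightarrow> real"
  assumes d1: "\<And>x. (E has_derivative blinfun_apply (f' x)) (at x)"
    and d2: "\<And>x. (f' has_derivative blinfun_apply (f'' x)) (at x)"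
  shows "\<exists>\<tau>. 0 \<le> \<tau> \<and> \<tau> \<le> 1 \<and> E (P + D) = E P + blinfun_apply (f' P) D
      + 1/2 * blinfun_apply (blinfun_apply (f'' (P + \<tau> *\<^sub>R D)) D) D"
proof -
  define df where "df m s = (if m = 0 then E (P + s *\<^sub>R D)
      else if m = 1 then blinfun_apply (f' (P + s *\<^sub>R D)) D
      else blinfun_apply (blinfun_apply (f'' (P + s *\<^sub>R D)) D) D)" for m :: nat and s :: real
  have "DERIV (df m) t :> df (Suc m) t" if "m < 2" for m t
  proof -
    have "m = 0 \<or> m = 1" using that by auto
    then show ?thesis
      using has_real_derivative_along_line[where g' = "\<lambda>x. blinfun_apply (f' x)", OF d1]
        has_real_derivative_along_line_blinfun[OF d2]
      unfolding df_def[abs_def] by auto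
  qed
  from Taylor[where n=2 and diff=df and f="\<lambda>s. E (P + s *\<^sub>R D)" and a=0 and b=1 and c=0 and x=1]
    this
  obtain t where "0 < t" "t < 1"
    "E (P + 1 *\<^sub>R D) = (\<Sum>m<2. df m 0 / fact m * (1 - 0) ^ m) + df 2 t / fact 2 * (1 - 0) ^ 2"
    unfolding df_def[abs_def] by auto
  then show ?thesis
    by (intro exI[of _ t]) (simp add: df_def numeral_2_eq_2)
qed

lemma taylor_second_order_remainder:
  fixes E :: "'a::real_normed_vector \<Rightarrow> real"
  assumes d1: "\<And>x. (E has_derivative blinfun_apply (f' x)) (at x)"
    and d2: "\<And>x. (f' has_derivative blinfun_apply (f'' x)) (at x)"
    and cont: "isCont f'' P" and e: "e > 0"
  shows "\<exists>r>0. \<forall>D. norm D < r \<longrightarrow> \<bar>E (P + D) - E P - blinfun_apply (f' P) D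
           - 1/2 * blinfun_apply (blinfun_apply (f'' P) D) D\<bar> \<le> e * (norm D)\<^sup>2"
proof -
  obtain r where r: "r > 0" and rr: "\<And>x. dist x P < r \<Longrightarrow> dist (f'' x) (f'' P) < 2 * e"
    using cont e unfolding continuous_at_eps_delta by (metis mult_pos_pos zero_less_numeral)
  have "\<bar>E (P + D) - E P - blinfun_apply (f' P) D - 1/2 * blinfun_apply (blinfun_apply (f'' P) D) D\<bar>
      \<le> e * (norm D)\<^sup>2" if D: "norm D < r" for D
  proof -
    obtain \<tau> where t: "0 \<le> \<tau>" "\<tau> \<le> 1" and tay: "E (P + D) = E P + blinfun_apply (f' P) D
      + 1/2 * blinfun_apply (blinfun_apply (f'' (P + \<tau> *\<^sub>R D)) D) D"
      using taylor_second_order[OF d1 d2, of P D] by blast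
    have "norm (\<tau> *\<^sub>R D) \<le> norm D" using t by (simp add: mult_left_le_one_le)
    then have n: "norm (f'' (P + \<tau> *\<^sub>R D) - f'' P) \<le> 2 * e"
      using rr[of "P + \<tau> *\<^sub>R D"] D by (simp add: dist_norm)
    have "E (P + D) - E P - blinfun_apply (f' P) D - 1/2 * blinfun_apply (blinfun_apply (f'' P) D) D
       = 1/2 * blinfun_apply (blinfun_apply (f'' (P + \<tau> *\<^sub>R D) - f'' P) D) D"
      using tay by (simp add: blinfun.diff_left algebra_simps)
    also have "\<bar>\<dots>\<bar> \<le> 1/2 * (norm (f'' (P + \<tau> *\<^sub>R D) - f'' P) * norm D * norm D)"
      using abs_blinfun_apply2_le by simp
    also have "\<dots> \<le> 1/2 * (2 * e * norm D * norm D)"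
      using n by (intro mult_left_mono mult_right_mono) auto
    finally show ?thesis by (simp add: power2_eq_square)
  qed
  then show ?thesis using r by blast
qed

section \<open>The operator \<open>\<Omega>\<close>\<close>

lemma Omega_expand:
  fixes P H X :: "real^'n^'n"
  assumes "transpose P = P" "transpose H = H" "transpose X = X"
  shows "Omega P H X = P ** X ** (mat 1 - P) ** H - H ** P ** X ** (mat 1 - P)
      + H ** (mat 1 - P) ** X ** P - (mat 1 - P) ** X ** P ** H"
  unfolding Omega_def Let_def using assms
  by (simp add: transpose_diff matrix_transpose_mul matrix_mul_assoc algebra_simps)

lemma transpose_Omega: "transpose (Omega P H X) = Omega P H (X::real^'n^'n)"
  unfolding Omega_def Let_def by (simp add: transpose_add add.commute)

lemma bounded_linear_Omega: "bounded_linear (Omega (P::real^'n^'n) H)"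
  by (rule bounded_linearI')
     (simp_all add: Omega_def Let_def matrix_mult_simps transpose_add transpose_diff transpose_scalar
       algebra_simps)

lemma Omega_in_tangent:
  fixes P H X :: "real^'n^'n"
  assumes P: "transpose P = P" "P ** P = P" and H: "transpose H = H" "H ** P = P ** H"
    and X: "transpose X = X"
  shows "Omega P H X \<in> tangent P"
proof -
  define Q where "Q = mat 1 - P"
  have QQ: "Q ** Q = Q" "P ** Q = 0" "Q ** P = 0"
    unfolding Q_def using idempotent_complement[OF P(2)] by auto
  have "P ** H ** Q = H ** (P ** Q)" "Q ** H ** P = (Q ** P) ** H"
    by (simp_all only: H(2)[symmetric] matrix_mul_assoc) (simp only: matrix_mul_assoc[symmetric] H(2))
  then have c: "P ** H ** Q = 0" "Q ** H ** P = 0" using QQ by simp_all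
  note rules = QQ c matrix_mult_assoc_zero[OF QQ(2)] matrix_mult_assoc_zero[OF QQ(3)]
    matrix_mult_assoc_eq[OF QQ(1)] matrix_mult_assoc_eq[OF P(2)]
    matrix_mult_assoc_zero3[OF c(1)] matrix_mult_assoc_zero3[OF c(2)] P(2)
  have om: "Omega P H X = P ** X ** Q ** H - H ** P ** X ** Q + H ** Q ** X ** P - Q ** X ** P ** H"
    unfolding Q_def using Omega_expand[OF P(1) H(1) X] .
  have "P ** Omega P H X ** P = 0" "Q ** Omega P H X ** Q = 0"
    unfolding om by (simp_all add: matrix_mult_simps rules)
  then show ?thesis unfolding tangent_def Hsym_def Q_def using transpose_Omega by auto
qed

lemma inner_Omega_tangent:
  fixes P H X Y :: "real^'n^'n"
  assumes P: "transpose P = P" "P ** P = P" and X: "X \<in> tangent P" and Y: "Y \<in> tangent P"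
  shows "inner (Omega P H X) Y = 2 * (inner H (((mat 1 - P) ** X ** P) ** (P ** Y ** (mat 1 - P)))
      - inner H ((P ** Y ** (mat 1 - P)) ** ((mat 1 - P) ** X ** P)))"
proof -
  define Q where "Q = mat 1 - P"
  have QQ: "Q ** Q = Q" "P ** Q = 0" "Q ** P = 0" "transpose Q = Q"
    unfolding Q_def using P by (simp_all add: matrix_mult_simps transpose_diff)
  define a where "a = P ** X ** Q"
  define b where "b = Q ** X ** P"
  have ta: "transpose a = b"
    unfolding a_def b_def using P QQ tangent_transpose[OF X]
    by (simp add: matrix_transpose_mul matrix_mul_assoc)
  have Ysplit: "Y = P ** Y ** Q + Q ** Y ** P"
    using tangent_block_decomposition(5)[OF Y] unfolding Q_def .
  define Y0 where "Y0 = a ** H - H ** a"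
  have "inner (transpose Y0) Y = inner Y0 Y"
    using inner_transpose[of Y0 Y] tangent_transpose[OF Y] by simp
  moreover have "Omega P H X = Y0 + transpose Y0"
    unfolding Omega_def Let_def Y0_def a_def Q_def by (simp add: matrix_mul_assoc)
  ultimately have "inner (Omega P H X) Y = 2 * inner Y0 Y" by (simp add: inner_add_left)
  also have "inner Y0 Y = inner H (b ** Y) - inner H (Y ** b)"
    unfolding Y0_def using inner_matrix_mult_left[of a H Y] inner_matrix_mult_right[of H a Y]
    by (simp add: inner_diff_left ta)
  also have "b ** Y = b ** (P ** Y ** Q)"
  proof -
    have "b ** (Q ** Y ** P) = 0" unfolding b_def using QQ
      by (metis matrix_mul_assoc times0_left times0_right)
    then show ?thesis by (subst Ysplit) (simp add: matrix_add_ldistrib)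
  qed
  also have "Y ** b = (P ** Y ** Q) ** b"
  proof -
    have "(Q ** Y ** P) ** b = 0" unfolding b_def using QQ
      by (metis matrix_mul_assoc times0_left times0_right)
    then show ?thesis by (subst Ysplit) (simp add: matrix_add_rdistrib)
  qed
  finally show ?thesis unfolding b_def Q_def by simp
qed

lemma Omega_self_adjoint:
  fixes P H X Y :: "real^'n^'n"
  assumes P: "transpose P = P" "P ** P = P" and H: "transpose H = H"
    and X: "X \<in> tangent P" and Y: "Y \<in> tangent P"
  shows "inner (Omega P H X) Y = inner X (Omega P H Y)"
proof -
  define Q where "Q = mat 1 - P"
  have tQ: "transpose Q = Q" unfolding Q_def using P by (simp add: transpose_diff)
  have tr: "inner H (A ** B) = inner H (transpose B ** transpose A)" for A B
    using inner_transpose[of H "A ** B"] H by (simp add: matrix_transpose_mul)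
  have t1: "transpose (Q ** Z ** P) = P ** Z ** Q" "transpose (P ** Z ** Q) = Q ** Z ** P"
    if "transpose Z = Z" for Z
    using that P tQ by (simp_all add: matrix_transpose_mul matrix_mul_assoc)
  have "inner (Omega P H X) Y
      = 2 * (inner H ((Q ** X ** P) ** (P ** Y ** Q)) - inner H ((P ** Y ** Q) ** (Q ** X ** P)))"
    using inner_Omega_tangent[OF P X Y] unfolding Q_def .
  also have "\<dots> = 2 * (inner H ((Q ** Y ** P) ** (P ** X ** Q)) - inner H ((P ** X ** Q) ** (Q ** Y ** P)))"
    by (simp add: tr[of "Q ** X ** P"] tr[of "P ** Y ** Q"] t1 tangent_transpose[OF X]
        tangent_transpose[OF Y])
  also have "\<dots> = inner (Omega P H Y) X"
    using inner_Omega_tangent[OF P Y X] unfolding Q_def by simp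
  finally show ?thesis by (simp add: inner_commute)
qed

lemma inner_Omega_self:
  fixes P H X :: "real^'n^'n"
  assumes P: "transpose P = P" "P ** P = P" and X: "X \<in> tangent P"
  shows "inner (Omega P H X) X = 2 * inner H ((mat 1 - P) ** (X ** X) ** (mat 1 - P) - P ** (X ** X) ** P)"
proof -
  note blocks = tangent_block_decomposition[OF X]
  have "(mat 1 - P) ** (X ** X) ** (mat 1 - P) = ((mat 1 - P) ** X ** P) ** (P ** X ** (mat 1 - P))"
  proof -
    have "(mat 1 - P) ** (X ** X) ** (mat 1 - P) = ((mat 1 - P) ** X) ** (X ** (mat 1 - P))"
      by (simp add: matrix_mul_assoc)
    then show ?thesis using blocks(3,4) by simp
  qed
  moreover have "P ** (X ** X) ** P = (P ** X ** (mat 1 - P)) ** ((mat 1 - P) ** X ** P)"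
  proof -
    have "P ** (X ** X) ** P = (P ** X) ** (X ** P)" by (simp add: matrix_mul_assoc)
    then show ?thesis using blocks(1,2) by simp
  qed
  ultimately show ?thesis unfolding inner_Omega_tangent[OF P X X] by (simp add: inner_diff_right)
qed

text \<open>For \<open>H\<close> commuting with \<open>P\<close>, \<open>\<Omega>\<close> is the part of the derivative of \<open>P \<mapsto> \<Pi>\<^sub>P H\<close> that comes
  from moving \<open>P\<close>.\<close>

lemma Omega_commuting:
  fixes P H Y :: "real^'n^'n"
  assumes P: "transpose P = P" "P ** P = P" and H: "transpose H = H" "H ** P = P ** H"
    and Y: "Y \<in> tangent P"
  shows "Omega P H Y = Y ** H ** (mat 1 - P) - P ** H ** Y + (mat 1 - P) ** H ** Y - Y ** H ** P"
proof -
  define a where "a = P ** Y ** (mat 1 - P)"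
  define b where "b = (mat 1 - P) ** Y ** P"
  note QQ = idempotent_complement[OF P(2)]
  have Yab: "Y = a + b" unfolding a_def b_def by (rule tangent_block_decomposition(5)[OF Y])
  have a1: "P ** a = a" unfolding a_def by (simp add: matrix_mul_assoc P(2))
  have a2: "a ** P = 0" unfolding a_def by (metis QQ(3) matrix_mul_assoc times0_right)
  have b1: "P ** b = 0" unfolding b_def by (metis QQ(2) matrix_mul_assoc times0_left)
  have b2: "b ** P = b" unfolding b_def by (metis P(2) matrix_mul_assoc)
  have PHa: "P ** H ** a = H ** a" by (metis H(2) a1 matrix_mul_assoc)
  have PHb: "P ** H ** b = 0" by (metis H(2) b1 matrix_mul_assoc times0_right)
  note rules = P(2) H(2) a1 a2 b1 b2 PHa PHb matrix_mult_assoc_eq[OF P(2)]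
    matrix_mult_assoc_eq[OF H(2)] matrix_mult_assoc_eq[OF a1] matrix_mult_assoc_zero[OF a2]
    matrix_mult_assoc_zero[OF b1] matrix_mult_assoc_eq[OF b2] matrix_mult_assoc_eq[OF PHa]
    matrix_mult_assoc_zero3[OF PHb]
  have "Omega P H Y = P ** Y ** (mat 1 - P) ** H - H ** P ** Y ** (mat 1 - P)
      + H ** (mat 1 - P) ** Y ** P - (mat 1 - P) ** Y ** P ** H"
    by (rule Omega_expand[OF P(1) H(1) tangent_transpose[OF Y]])
  also have "\<dots> = Y ** H ** (mat 1 - P) - P ** H ** Y + (mat 1 - P) ** H ** Y - Y ** H ** P"
    unfolding Yab by (simp add: matrix_mult_simps rules algebra_simps)
  finally show ?thesis .
qed

section \<open>Spectral radius of self-adjoint operators\<close>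

lemma bdd_above_cmod_cspec:
  fixes L :: "'a::real_inner \<Rightarrow> 'a"
  assumes bl: "bounded_linear L"
  shows "bdd_above (cmod ` cspec T L)"
proof -
  obtain K where K: "K > 0" "\<And>x. norm (L x) \<le> norm x * K"
    using bounded_linear.pos_bounded[OF bl] by blast
  have "cmod z \<le> K" if z: "z \<in> cspec T L" for z
  proof -
    obtain u v where uv: "u \<noteq> 0 \<or> v \<noteq> 0" "L u = Re z *\<^sub>R u - Im z *\<^sub>R v" "L v = Im z *\<^sub>R u + Re z *\<^sub>R v"
      using z unfolding cspec_def by blast
    define a b where "a = Re z" "b = Im z"
    have pos: "(norm u)\<^sup>2 + (norm v)\<^sup>2 > 0" using uv(1) by (auto simp: add_pos_nonneg add_nonneg_pos)
    have eq: "(norm (L u))\<^sup>2 + (norm (L v))\<^sup>2 = (a\<^sup>2 + b\<^sup>2) * ((norm u)\<^sup>2 + (norm v)\<^sup>2)"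
      unfolding uv(2,3) a_b_def[symmetric] power2_norm_eq_inner
      by (simp add: inner_diff_left inner_diff_right inner_add_left inner_add_right
          inner_commute power2_eq_square algebra_simps)
    have "(norm (L u))\<^sup>2 \<le> (norm u * K)\<^sup>2" "(norm (L v))\<^sup>2 \<le> (norm v * K)\<^sup>2"
      using K(2) by (intro power_mono; simp)+
    then have "(a\<^sup>2 + b\<^sup>2) * ((norm u)\<^sup>2 + (norm v)\<^sup>2) \<le> K\<^sup>2 * ((norm u)\<^sup>2 + (norm v)\<^sup>2)"
      unfolding eq[symmetric] by (simp add: power_mult_distrib algebra_simps)
    then have "a\<^sup>2 + b\<^sup>2 \<le> K\<^sup>2" using pos by (simp add: mult_le_cancel_right)
    then have "sqrt (a\<^sup>2 + b\<^sup>2) \<le> sqrt (K\<^sup>2)" by (rule real_sqrt_le_mono)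
    then show ?thesis using K(1) unfolding a_b_def cmod_def by simp
  qed
  then show ?thesis by (auto simp: bdd_above_def)
qed

lemma cspec_self_adjoint:
  fixes L :: "'a::real_inner \<Rightarrow> 'a"
  assumes sym: "\<forall>x\<in>T. \<forall>y\<in>T. inner (L x) y = inner x (L y)"
    and z: "z \<in> cspec T L"
  shows "Im z = 0 \<and> (\<exists>w\<in>T. w \<noteq> 0 \<and> L w = Re z *\<^sub>R w)"
proof -
  obtain u v where uv: "u \<in> T" "v \<in> T" "u \<noteq> 0 \<or> v \<noteq> 0"
    "L u = Re z *\<^sub>R u - Im z *\<^sub>R v" "L v = Im z *\<^sub>R u + Re z *\<^sub>R v"
    using z unfolding cspec_def by blast
  have pos: "(norm u)\<^sup>2 + (norm v)\<^sup>2 \<noteq> 0" using uv(3) by (auto simp: add_nonneg_eq_0_iff)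
  have "inner (L u) v = inner u (L v)" using sym uv by blast
  then have "Im z * ((norm u)\<^sup>2 + (norm v)\<^sup>2) = 0"
    unfolding uv(4,5) power2_norm_eq_inner
    by (simp add: inner_diff_left inner_add_right inner_commute algebra_simps)
  then have "Im z = 0" using pos uv(3) by auto
  then show ?thesis using uv by (cases "u = 0") auto
qed

lemma spec_radius_nonneg:
  fixes L :: "'a::real_inner \<Rightarrow> 'a"
  assumes "bounded_linear L"
  shows "spec_radius T L \<ge> 0"
proof (cases "cspec T L = {}")
  case False
  then obtain z where "z \<in> cspec T L" by blast
  then have "cmod z \<le> Sup (cmod ` cspec T L)"
    using bdd_above_cmod_cspec[OF assms] by (intro cSup_upper) auto
  then show ?thesis using False unfolding spec_radius_def by (simp add: order_trans[OF norm_ge_zero])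
qed (simp add: spec_radius_def)

lemma abs_eigenvalue_le_spec_radius:
  fixes L :: "'a::real_inner \<Rightarrow> 'a"
  assumes bl: "bounded_linear L" and w: "w \<in> T" "w \<noteq> 0" "L w = a *\<^sub>R w"
  shows "\<bar>a\<bar> \<le> spec_radius T L"
proof -
  have z: "complex_of_real a \<in> cspec T L"
    unfolding cspec_def using w by (intro CollectI exI[of _ w] exI[of _ 0]) auto
  then have "cmod (complex_of_real a) \<le> Sup (cmod ` cspec T L)"
    using cSup_upper[OF imageI bdd_above_cmod_cspec[OF bl]] by blast
  then show ?thesis using z unfolding spec_radius_def by auto
qed

lemma spec_radius_self_adjoint_le:
  fixes L :: "'a::real_inner \<Rightarrow> 'a"
  assumes sym: "\<forall>x\<in>T. \<forall>y\<in>T. inner (L x) y = inner x (L y)"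
    and c: "c \<ge> 0" and ev: "\<And>w a. w \<in> T \<Longrightarrow> w \<noteq> 0 \<Longrightarrow> L w = a *\<^sub>R w \<Longrightarrow> \<bar>a\<bar> \<le> c"
  shows "spec_radius T L \<le> c"
proof (cases "cspec T L = {}")
  case False
  have "cmod z \<le> c" if "z \<in> cspec T L" for z
  proof -
    from cspec_self_adjoint[OF sym that]
    obtain w where "Im z = 0" "w \<in> T" "w \<noteq> 0" "L w = Re z *\<^sub>R w" by blast
    then show ?thesis using ev by (simp add: cmod_def)
  qed
  then show ?thesis unfolding spec_radius_def using False by (auto intro!: cSup_least)
qed (use c in \<open>simp add: spec_radius_def\<close>)

lemma quadratic_nonneg_imp_linear_coeff_0:
  fixes c q :: real
  assumes "q \<ge> 0" "\<And>t. 2 * t * c + t\<^sup>2 * q \<ge> 0"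
  shows "c = 0"
proof (rule ccontr)
  assume "c \<noteq> 0"
  define t where "t = - c / (q + 1)"
  have q1: "q + 1 > 0" using assms(1) by simp
  have "t\<^sup>2 * q = (c\<^sup>2 / (q + 1)) * (q / (q + 1))" unfolding t_def
    by (simp add: power2_eq_square power_divide)
  also have "\<dots> \<le> c\<^sup>2 / (q + 1)" using q1 by (intro mult_left_le) auto
  finally have "2 * t * c + t\<^sup>2 * q \<le> - (c\<^sup>2 / (q + 1))"
    unfolding t_def by (simp add: power2_eq_square)
  also have "\<dots> < 0" using \<open>c \<noteq> 0\<close> q1 by simp
  finally show False using assms(2)[of t] by simp
qed

lemma norm_attained_on_subspace:
  fixes L :: "'a::euclidean_space \<Rightarrow> 'b::real_normed_vector"
  assumes "bounded_linear L" "subspace T" "y1 \<in> T" "y1 \<noteq> 0"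
  obtains y0 where "y0 \<in> T" "norm y0 = 1" "\<And>x. x \<in> T \<Longrightarrow> norm (L x) \<le> norm (L y0) * norm x"
proof -
  define S where "S = sphere 0 1 \<inter> T"
  have "compact S" unfolding S_def using closed_subspace[OF assms(2)] by (intro compact_Int_closed) auto
  moreover have "y1 /\<^sub>R norm y1 \<in> S" unfolding S_def using assms by (auto simp: subspace_scale)
  moreover have "continuous_on S (\<lambda>y. norm (L y))"
    by (intro continuous_on_norm linear_continuous_on assms(1))
  ultimately obtain y0 where y0: "y0 \<in> S" and mx: "\<And>y. y \<in> S \<Longrightarrow> norm (L y) \<le> norm (L y0)"
    using continuous_attains_sup[of S "\<lambda>y. norm (L y)"] by blast
  have "norm (L x) \<le> norm (L y0) * norm x" if "x \<in> T" for x
  proof (cases "x = 0")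
    case False
    have "x /\<^sub>R norm x \<in> S" unfolding S_def using that False assms(2) by (auto simp: subspace_scale)
    then have "norm (L (x /\<^sub>R norm x)) \<le> norm (L y0)" using mx by blast
    then show ?thesis using False by (simp add: linear_simps(5)[OF assms(1)] field_simps)
  qed (simp add: linear_simps(3)[OF assms(1)])
  then show ?thesis using that y0 unfolding S_def by auto
qed

text \<open>First-order optimality of the Rayleigh quotient \<open>|L y|\<^sup>2 / |y|\<^sup>2\<close> at a maximizer.\<close>

lemma self_adjoint_norm_maximizer:
  fixes L :: "'a::real_inner \<Rightarrow> 'a"
  assumes bl: "bounded_linear L" and sub: "subspace T" and maps: "\<And>x. x \<in> T \<Longrightarrow> L x \<in> T"
    and sym: "\<forall>x\<in>T. \<forall>y\<in>T. inner (L x) y = inner x (L y)"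
    and y0: "y0 \<in> T" "norm y0 = 1" and mx: "\<And>x. x \<in> T \<Longrightarrow> norm (L x) \<le> norm (L y0) * norm x"
  shows "L (L y0) = (norm (L y0))\<^sup>2 *\<^sub>R y0"
proof -
  define s where "s = norm (L y0)"
  define A where "A = s\<^sup>2 *\<^sub>R y0 - L (L y0)"
  have y01: "inner y0 y0 = 1" using y0(2) by (simp add: dot_square_norm)
  have orth: "inner A h = 0" if h: "h \<in> T" for h
  proof (rule quadratic_nonneg_imp_linear_coeff_0)
    show "s\<^sup>2 * (norm h)\<^sup>2 - (norm (L h))\<^sup>2 \<ge> 0"
      using mx[OF h] unfolding s_def by (simp add: power_mono power_mult_distrib[symmetric])
    fix t
    have yt: "y0 + t *\<^sub>R h \<in> T" using y0 h sub by (auto intro: subspace_add subspace_scale)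
    have "(norm (L (y0 + t *\<^sub>R h)))\<^sup>2 \<le> (s * norm (y0 + t *\<^sub>R h))\<^sup>2"
      using mx[OF yt] unfolding s_def by (intro power_mono) auto
    moreover have "(norm (L (y0 + t *\<^sub>R h)))\<^sup>2
        = s\<^sup>2 + 2 * t * inner (L (L y0)) h + t\<^sup>2 * (norm (L h))\<^sup>2"
    proof -
      have "inner (L (L y0)) h = inner (L y0) (L h)" using sym maps y0 h by auto
      then show ?thesis
        unfolding linear_simps(1,5)[OF bl] power2_norm_eq_inner s_def
        by (simp add: inner_add_left inner_add_right inner_commute power2_eq_square algebra_simps)
    qed
    moreover have "(s * norm (y0 + t *\<^sub>R h))\<^sup>2 = s\<^sup>2 * (1 + 2 * t * inner y0 h + t\<^sup>2 * (norm h)\<^sup>2)"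
      unfolding power_mult_distrib power2_norm_eq_inner using y01 inner_commute[of h y0]
      by (simp add: inner_add_left inner_add_right power2_eq_square algebra_simps power2_norm_eq_inner)
    ultimately show "2 * t * inner A h + t\<^sup>2 * (s\<^sup>2 * (norm h)\<^sup>2 - (norm (L h))\<^sup>2) \<ge> 0"
      unfolding A_def by (simp add: inner_diff_left algebra_simps power2_eq_square)
  qed
  have "A \<in> T" unfolding A_def using y0 maps sub by (auto intro: subspace_diff subspace_scale)
  from orth[OF this] show ?thesis unfolding A_def s_def by simp
qed

text \<open>For a self-adjoint operator the norm on an invariant subspace is its spectral radius:
  if \<open>L\<^sup>2 y\<^sub>0 = s\<^sup>2 y\<^sub>0\<close>, then either \<open>L y\<^sub>0 = -s y\<^sub>0\<close> or \<open>L y\<^sub>0 + s y\<^sub>0\<close> is an eigenvector for \<open>s\<close>.\<close>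

lemma norm_le_spec_radius:
  fixes L :: "'a::euclidean_space \<Rightarrow> 'a"
  assumes bl: "bounded_linear L" and sub: "subspace T" and maps: "\<And>x. x \<in> T \<Longrightarrow> L x \<in> T"
    and sym: "\<forall>x\<in>T. \<forall>y\<in>T. inner (L x) y = inner x (L y)"
    and y: "y \<in> T"
  shows "norm (L y) \<le> spec_radius T L * norm y"
proof (cases "y = 0")
  case False
  then obtain y0 where y0: "y0 \<in> T" "norm y0 = 1"
    and mx: "\<And>x. x \<in> T \<Longrightarrow> norm (L x) \<le> norm (L y0) * norm x"
    using norm_attained_on_subspace[OF bl sub y] by blast
  define s where "s = norm (L y0)"
  have LL: "L (L y0) = s\<^sup>2 *\<^sub>R y0"
    unfolding s_def by (rule self_adjoint_norm_maximizer[OF bl sub maps sym y0 mx])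
  have "s \<le> spec_radius T L"
  proof (cases "L y0 + s *\<^sub>R y0 = 0")
    case True
    then have "L y0 = (- s) *\<^sub>R y0" by (simp add: eq_neg_iff_add_eq_0)
    with abs_eigenvalue_le_spec_radius[OF bl y0(1)] y0(2) show ?thesis by fastforce
  next
    case False
    have "L y0 + s *\<^sub>R y0 \<in> T" using y0 maps sub by (auto intro: subspace_add subspace_scale)
    moreover have "L (L y0 + s *\<^sub>R y0) = s *\<^sub>R (L y0 + s *\<^sub>R y0)"
      using LL by (simp add: linear_simps[OF bl] algebra_simps power2_eq_square)
    ultimately show ?thesis
      using abs_eigenvalue_le_spec_radius[OF bl _ False] unfolding s_def by fastforce
  qed
  then show ?thesis using mx[OF y] unfolding s_def by (meson mult_right_mono norm_ge_zero order_trans)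
qed (simp add: linear_simps(3)[OF bl])

section \<open>Linear convergence of locally contracting iterations\<close>

lemma funpow_contraction:
  fixes F :: "'a::real_normed_vector \<Rightarrow> 'a"
  assumes q: "0 \<le> q" "q \<le> 1"
    and step: "\<And>x. x \<in> M \<Longrightarrow> norm (x - p) < \<delta> \<Longrightarrow> F x \<in> M \<and> norm (F x - p) \<le> q * norm (x - p)"
    and x0: "x0 \<in> M" "norm (x0 - p) < \<delta>"
  shows "(F ^^ k) x0 \<in> M \<and> norm ((F ^^ k) x0 - p) \<le> q ^ k * norm (x0 - p)"
proof (induction k)
  case (Suc k)
  have "q ^ k * norm (x0 - p) \<le> norm (x0 - p)"
    using q by (intro mult_left_le_one_le power_le_one) auto
  then have "norm ((F ^^ k) x0 - p) < \<delta>" using Suc x0 by linarith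
  then have "F ((F ^^ k) x0) \<in> M \<and> norm (F ((F ^^ k) x0) - p) \<le> q * norm ((F ^^ k) x0 - p)"
    using step Suc by blast
  moreover have "q * norm ((F ^^ k) x0 - p) \<le> q * (q ^ k * norm (x0 - p))"
    using Suc q by (intro mult_left_mono) auto
  ultimately show ?case by auto
qed (use x0 in simp)

text \<open>The factor \<open>q\<^sub>0\<close>, valid on the larger ball, brings every iterate after a number \<open>K\<close> of steps
  independent of the starting point into the smaller ball on which the sharper factor \<open>q\<close>
  applies; the first \<open>K\<close> steps only cost the constant \<open>(q\<^sub>0/q)\<^sup>K\<close>.\<close>

lemma funpow_two_rate_contraction:
  fixes F :: "'a::real_normed_vector \<Rightarrow> 'a"
  assumes q: "0 < q" "q \<le> q0" "q0 < 1" and \<rho>: "\<rho> > 0" and \<delta>: "\<delta> > 0"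
    and step0: "\<And>x. x \<in> M \<Longrightarrow> norm (x - p) < \<delta> \<Longrightarrow> F x \<in> M \<and> norm (F x - p) \<le> q0 * norm (x - p)"
    and step: "\<And>x. x \<in> M \<Longrightarrow> norm (x - p) < \<rho> \<Longrightarrow> F x \<in> M \<and> norm (F x - p) \<le> q * norm (x - p)"
  shows "\<exists>C>0. \<forall>x0\<in>M. norm (x0 - p) < \<delta> \<longrightarrow> (\<forall>k. norm ((F ^^ k) x0 - p) \<le> C * q ^ k * norm (x0 - p))"
proof -
  note iter0 = funpow_contraction[of q0 M p \<delta> F, OF _ _ step0]
  obtain K where K: "q0 ^ K * \<delta> < \<rho>"
    using real_arch_pow_inv[of "\<rho> / \<delta>" q0] \<rho> \<delta> q by (auto simp: pos_less_divide_eq)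
  define C where "C = (q0 / q) ^ K"
  have C: "C > 0" "1 \<le> q0 / q" using q unfolding C_def by auto
  have "norm ((F ^^ k) x0 - p) \<le> C * q ^ k * norm (x0 - p)"
    if x0: "x0 \<in> M" "norm (x0 - p) < \<delta>" for x0 k
  proof (cases "k \<le> K")
    case True
    have "norm ((F ^^ k) x0 - p) \<le> q0 ^ k * norm (x0 - p)" using iter0 x0 q by auto
    also have "q0 ^ k = (q0 / q) ^ k * q ^ k" using q by (simp add: power_divide)
    also have "(q0 / q) ^ k \<le> C" unfolding C_def using C True by (intro power_increasing) auto
    finally show ?thesis using q by (simp add: mult_right_mono)
  next
    case False
    then obtain j where k: "k = j + K" by (metis add.commute le_add_diff_inverse nat_le_linear)
    define x1 where "x1 = (F ^^ K) x0"
    have Fk: "(F ^^ k) x0 = (F ^^ j) x1" unfolding k x1_def funpow_add by simp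
    have x1: "x1 \<in> M" "norm (x1 - p) \<le> q0 ^ K * norm (x0 - p)"
      using iter0 x0 q unfolding x1_def by auto
    have "q0 ^ K * norm (x0 - p) \<le> q0 ^ K * \<delta>" using x0 q by (intro mult_left_mono) auto
    then have "norm (x1 - p) < \<rho>" using K x1(2) by linarith
    then have "norm ((F ^^ j) x1 - p) \<le> q ^ j * norm (x1 - p)"
      using funpow_contraction[of q M p \<rho> F x1 j] step q x1(1) by auto
    also have "\<dots> \<le> q ^ j * (q0 ^ K * norm (x0 - p))"
      using x1(2) q by (intro mult_left_mono) auto
    also have "q0 ^ K = C * q ^ K" unfolding C_def using q by (simp add: power_divide)
    finally have "norm ((F ^^ j) x1 - p) \<le> C * q ^ (j + K) * norm (x0 - p)"
      by (simp add: power_add algebra_simps)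
    then show ?thesis unfolding Fk unfolding k .
  qed
  then show ?thesis using C by blast
qed

lemma local_contraction_linear_convergence:
  fixes F :: "'a::real_normed_vector \<Rightarrow> 'a"
  assumes r: "0 \<le> r" "r < 1"
    and loc: "\<And>\<theta>. \<theta> > 0 \<Longrightarrow> \<exists>\<rho>>0. \<forall>x\<in>M. norm (x - p) < \<rho> \<longrightarrow>
                F x \<in> M \<and> norm (F x - p) \<le> (r + \<theta>) * norm (x - p)"
  shows "\<exists>\<delta>>0. \<forall>\<theta>>0. \<exists>C>0. \<forall>x0\<in>M. norm (x0 - p) < \<delta> \<longrightarrow>
           (\<forall>k. norm ((F ^^ k) x0 - p) \<le> C * (r + \<theta>) ^ k * norm (x0 - p))"
proof -
  define q0 where "q0 = (1 + r) / 2"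
  have q0: "r < q0" "q0 < 1" using r unfolding q0_def by auto
  obtain \<delta> where \<delta>: "\<delta> > 0" and step0: "\<forall>x\<in>M. norm (x - p) < \<delta> \<longrightarrow>
      F x \<in> M \<and> norm (F x - p) \<le> q0 * norm (x - p)"
    using loc[of "q0 - r"] q0 by auto
  have "\<exists>C>0. \<forall>x0\<in>M. norm (x0 - p) < \<delta> \<longrightarrow>
      (\<forall>k. norm ((F ^^ k) x0 - p) \<le> C * (r + \<theta>) ^ k * norm (x0 - p))" if "\<theta> > 0" for \<theta>
  proof -
    define q where "q = min (r + \<theta>) q0"
    have q: "r < q" "q \<le> q0" "q \<le> r + \<theta>" using that q0 unfolding q_def by auto
    obtain \<rho> where "\<rho> > 0" and step: "\<forall>x\<in>M. norm (x - p) < \<rho> \<longrightarrow>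
        F x \<in> M \<and> norm (F x - p) \<le> q * norm (x - p)"
      using loc[of "q - r"] q by auto
    with funpow_two_rate_contraction[of q q0 \<rho> \<delta> M p F] q q0 r \<delta> step0
    obtain C where "C > 0" and "\<forall>x0\<in>M. norm (x0 - p) < \<delta> \<longrightarrow>
        (\<forall>k. norm ((F ^^ k) x0 - p) \<le> C * q ^ k * norm (x0 - p))"
      by auto
    moreover have "C * q ^ k * norm (x0 - p) \<le> C * (r + \<theta>) ^ k * norm (x0 - p)" for x0 k
      using \<open>C > 0\<close> q r by (intro mult_right_mono mult_left_mono power_mono) auto
    ultimately show ?thesis by (meson order_trans)
  qed
  then show ?thesis using \<delta> by blast
qed

lemma MN_transpose: "P \<in> MN N \<Longrightarrow> transpose P = P"
  unfolding MN_def Hsym_def by auto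

lemma MN_idempotent: "P \<in> MN N \<Longrightarrow> P ** P = P"
  unfolding MN_def by auto

lemma idempotent_secant_normal_part_bound:
  fixes P :: "real^'n^'n"
  assumes "P ** P = P"
  shows "\<exists>c>0. \<forall>P'. P' ** P' = P' \<longrightarrow> norm ((P' - P) - PiP P (P' - P)) \<le> c * (norm (P' - P))\<^sup>2"
proof -
  obtain K where K: "K > 0" "\<And>(A::real^'n^'n) (B::real^'n^'n). norm (A ** B) \<le> norm A * norm B * K"
    using bounded_bilinear.pos_bounded[OF bounded_bilinear_matrix_mult] by blast
  define c where "c = K * K * K * ((norm P)\<^sup>2 + (norm (mat 1 - P))\<^sup>2) + 1"
  have c: "c > 0" unfolding c_def using K by (simp add: add_nonneg_pos)
  have sandwich: "norm (U ** (D ** D) ** U) \<le> K * K * K * (norm U)\<^sup>2 * (norm D)\<^sup>2" for U D :: "real^'n^'n"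
  proof -
    have "norm (U ** (D ** D) ** U) \<le> norm (U ** (D ** D)) * norm U * K" by (rule K(2))
    also have "\<dots> \<le> (norm U * norm (D ** D) * K) * norm U * K"
      using K by (intro mult_right_mono K(2)) auto
    also have "\<dots> \<le> (norm U * (norm D * norm D * K) * K) * norm U * K"
      using K by (intro mult_right_mono mult_left_mono K(2)) auto
    finally show ?thesis by (simp add: power2_eq_square algebra_simps)
  qed
  have "norm ((P' - P) - PiP P (P' - P)) \<le> c * (norm (P' - P))\<^sup>2" if "P' ** P' = P'" for P'
  proof -
    define D where "D = P' - P"
    have "norm (D - PiP P D) = norm ((mat 1 - P) ** (D ** D) ** (mat 1 - P) - P ** (D ** D) ** P)"
      unfolding D_def using idempotent_secant_normal_part[OF assms that] by simp
    also have "\<dots> \<le> norm ((mat 1 - P) ** (D ** D) ** (mat 1 - P)) + norm (P ** (D ** D) ** P)"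
      by (rule norm_triangle_ineq4)
    also have "\<dots> \<le> K * K * K * (norm (mat 1 - P))\<^sup>2 * (norm D)\<^sup>2 + K * K * K * (norm P)\<^sup>2 * (norm D)\<^sup>2"
      by (intro add_mono sandwich)
    also have "\<dots> \<le> c * (norm D)\<^sup>2" unfolding c_def by (simp add: algebra_simps)
    finally show ?thesis unfolding D_def .
  qed
  then show ?thesis using c by blast
qed

locale minimizer_with_retraction =
  fixes E :: "real^'n^'n \<Rightarrow> real"
    and f' :: "real^'n^'n \<Rightarrow> (real^'n^'n) \<Rightarrow>\<^sub>L real"
    and f'' :: "real^'n^'n \<Rightarrow> (real^'n^'n) \<Rightarrow>\<^sub>L ((real^'n^'n) \<Rightarrow>\<^sub>L real)"
    and R :: "real^'n^'n \<Rightarrow> real^'n^'n" and Ps :: "real^'n^'n" and N :: nat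
    and \<eta> \<epsilon> \<delta>R CR :: real
  assumes E_deriv: "\<And>x. (E has_derivative blinfun_apply (f' x)) (at x)"
    and E_deriv2: "\<And>x. (f' has_derivative blinfun_apply (f'' x)) (at x)"
    and E_deriv2_cont: "isCont f'' Ps"
    and Ps_in: "Ps \<in> MN N"
    and eta: "\<eta> > 0" and eps: "\<epsilon> > 0"
    and nondeg: "\<And>P. P \<in> MN N \<Longrightarrow> norm (P - Ps) < \<epsilon> \<Longrightarrow> E P \<ge> E Ps + \<eta> * (norm (P - Ps))\<^sup>2"
    and dR: "\<delta>R > 0" and CR: "CR \<ge> 0"
    and retraction: "\<And>P X. P \<in> MN N \<Longrightarrow> X \<in> Hsym \<Longrightarrow> norm X < \<delta>R \<Longrightarrow>
        R (P + X) \<in> MN N \<and> norm (R (P + X) - (P + PiP P X)) \<le> CR * (norm X)\<^sup>2"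
begin

abbreviation "G \<equiv> gradH E Ps"
abbreviation "Hs \<equiv> hessH E Ps"
abbreviation "J \<equiv> Jgrad E Ps"
abbreviation "T \<equiv> tangent Ps"

lemma Ps_transpose: "transpose Ps = Ps"
  using MN_transpose[OF Ps_in] .

lemma Ps_idempotent: "Ps ** Ps = Ps"
  using MN_idempotent[OF Ps_in] .

lemma inner_G: "transpose D = D \<Longrightarrow> inner G D = blinfun_apply (f' Ps) D"
  using inner_gradH[of E f' Ps D] E_deriv by blast

lemma retraction_tangent:
  assumes "P \<in> MN N" "X \<in> Hsym" "PiP P X = X" "norm X < \<delta>R"
  shows "R (P + X) \<in> MN N \<and> norm (R (P + X) - (P + X)) \<le> CR * (norm X)\<^sup>2"
  using retraction[OF assms(1,2,4)] assms(3) by simp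

lemma retraction_curve:
  assumes X: "X \<in> T" and t: "0 < t" "t * norm X < \<delta>R"
  shows "R (Ps + t *\<^sub>R X) \<in> MN N \<and> norm ((R (Ps + t *\<^sub>R X) - Ps) /\<^sub>R t - X) \<le> CR * t * (norm X)\<^sup>2"
proof -
  have "t *\<^sub>R X \<in> Hsym" using tangent_transpose[OF X] unfolding Hsym_def by (simp add: transpose_scalar)
  moreover have "PiP Ps (t *\<^sub>R X) = t *\<^sub>R X"
    using PiP_tangent[OF X] by (simp add: linear_simps(5)[OF bounded_linear_PiP])
  ultimately have step: "R (Ps + t *\<^sub>R X) \<in> MN N"
    "norm (R (Ps + t *\<^sub>R X) - (Ps + t *\<^sub>R X)) \<le> CR * (t * norm X)\<^sup>2"
    using retraction_tangent[OF Ps_in, of "t *\<^sub>R X"] t by simp_all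
  define v where "v = R (Ps + t *\<^sub>R X) - (Ps + t *\<^sub>R X)"
  have "(R (Ps + t *\<^sub>R X) - Ps) /\<^sub>R t - X = inverse t *\<^sub>R v"
    using t unfolding v_def by (simp add: scaleR_diff_right scaleR_add_right)
  then have "norm ((R (Ps + t *\<^sub>R X) - Ps) /\<^sub>R t - X) = norm v / t"
    using t by (simp add: divide_inverse mult.commute)
  also have "\<dots> \<le> CR * t * (norm X)\<^sup>2"
    using step(2) t unfolding v_def by (simp add: pos_divide_le_eq power2_eq_square mult_ac)
  finally show ?thesis using step(1) by simp
qed

lemma tangent_curve:
  assumes X: "X \<in> T"
  shows "\<forall>\<^sub>F t in at_right 0. R (Ps + t *\<^sub>R X) \<in> MN N"
    and "((\<lambda>t. (R (Ps + t *\<^sub>R X) - Ps) /\<^sub>R t) \<longlongrightarrow> X) (at_right 0)"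
    and "((\<lambda>t. R (Ps + t *\<^sub>R X) - Ps) \<longlongrightarrow> 0) (at_right 0)"
proof -
  have "((\<lambda>t. t * norm X) \<longlongrightarrow> 0) (at_right 0)"
    by (rule tendsto_mult_left_zero[OF tendsto_ident_at])
  then have "\<forall>\<^sub>F t in at_right 0. t * norm X < \<delta>R" using dR by (rule order_tendstoD)
  then have ev: "\<forall>\<^sub>F t in at_right 0. R (Ps + t *\<^sub>R X) \<in> MN N
      \<and> norm ((R (Ps + t *\<^sub>R X) - Ps) /\<^sub>R t - X) \<le> CR * t * (norm X)\<^sup>2"
    using eventually_at_right_less[of 0] by eventually_elim (use retraction_curve[OF X] in auto)
  then show "\<forall>\<^sub>F t in at_right 0. R (Ps + t *\<^sub>R X) \<in> MN N" by (rule eventually_mono) auto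
  from ev have "\<forall>\<^sub>F t in at_right 0. norm ((R (Ps + t *\<^sub>R X) - Ps) /\<^sub>R t - X) \<le> CR * t * (norm X)\<^sup>2"
    by (rule eventually_mono) simp
  moreover have "((\<lambda>t. CR * t * (norm X)\<^sup>2) \<longlongrightarrow> 0) (at_right 0)"
    by (intro tendsto_mult_left_zero tendsto_mult_right_zero tendsto_ident_at)
  ultimately have "((\<lambda>t. (R (Ps + t *\<^sub>R X) - Ps) /\<^sub>R t - X) \<longlongrightarrow> 0) (at_right 0)"
    by (rule Lim_null_comparison)
  then show secant: "((\<lambda>t. (R (Ps + t *\<^sub>R X) - Ps) /\<^sub>R t) \<longlongrightarrow> X) (at_right 0)"
    by (rule LIM_zero_cancel)
  have "((\<lambda>t. t *\<^sub>R ((R (Ps + t *\<^sub>R X) - Ps) /\<^sub>R t)) \<longlongrightarrow> 0 *\<^sub>R X) (at_right 0)"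
    by (intro tendsto_scaleR secant tendsto_ident_at)
  then show "((\<lambda>t. R (Ps + t *\<^sub>R X) - Ps) \<longlongrightarrow> 0) (at_right 0)"
    unfolding scaleR_zero_left by (rule Lim_transform_eventually)
       (use eventually_at_right_less[of 0] in \<open>eventually_elim, simp\<close>)
qed

section \<open>Optimality conditions and the Jacobian \<open>J\<close>\<close>

text \<open>Along the curve \<open>t \<mapsto> R (Ps + t X)\<close> the increment of \<open>E\<close> is nonnegative and equals
  \<open>t f' X + O(t\<^sup>2)\<close>.\<close>

lemma deriv_tangent_nonneg:
  assumes X: "X \<in> T"
  shows "blinfun_apply (f' Ps) X \<ge> 0"
proof -
  define D where "D t = R (Ps + t *\<^sub>R X) - Ps" for t
  define M where "M = norm (f'' Ps) / 2 + 1"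
  obtain r where r: "r > 0" and taylor: "\<And>D. norm D < r \<Longrightarrow> \<bar>E (Ps + D) - E Ps
      - blinfun_apply (f' Ps) D - 1/2 * blinfun_apply (blinfun_apply (f'' Ps) D) D\<bar> \<le> 1 * (norm D)\<^sup>2"
    using taylor_second_order_remainder[OF E_deriv E_deriv2 E_deriv2_cont, of 1] by auto
  have "((\<lambda>t. norm (D t)) \<longlongrightarrow> 0) (at_right 0)"
    using tendsto_norm[OF tangent_curve(3)[OF X]] unfolding D_def by simp
  then have "\<forall>\<^sub>F t in at_right 0. norm (D t) < min \<epsilon> r"
    using eps r by (intro order_tendstoD) auto
  then have "\<forall>\<^sub>F t in at_right 0.
      0 \<le> blinfun_apply (f' Ps) (D t /\<^sub>R t) + M * t * (norm (D t /\<^sub>R t))\<^sup>2"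
    using tangent_curve(1)[OF X] eventually_at_right_less[of 0]
  proof eventually_elim
    case (elim t)
    have "E Ps + \<eta> * (norm (D t))\<^sup>2 \<le> E (Ps + D t)"
      using nondeg[of "Ps + D t"] elim unfolding D_def by simp
    moreover have "0 \<le> \<eta> * (norm (D t))\<^sup>2" using eta by simp
    ultimately have "0 \<le> E (Ps + D t) - E Ps" by linarith
    also have "\<dots> \<le> blinfun_apply (f' Ps) (D t) + M * (norm (D t))\<^sup>2"
      using taylor[of "D t"] abs_blinfun_apply2_le[of "f'' Ps" "D t" "D t"] elim
      unfolding M_def by (simp add: power2_eq_square algebra_simps abs_le_iff)
    finally have "0 \<le> (blinfun_apply (f' Ps) (D t) + M * (norm (D t))\<^sup>2) / t"
      using elim by simp
    then show ?case
      using elim by (simp add: blinfun.scaleR_right power2_eq_square field_simps)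
  qed
  moreover have "((\<lambda>t. blinfun_apply (f' Ps) (D t /\<^sub>R t) + M * t * (norm (D t /\<^sub>R t))\<^sup>2)
      \<longlongrightarrow> blinfun_apply (f' Ps) X + M * 0 * (norm X)\<^sup>2) (at_right 0)"
    using tangent_curve(2)[OF X] unfolding D_def by (intro tendsto_intros tendsto_ident_at)
  ultimately show ?thesis by (intro tendsto_lowerbound) auto
qed

lemma PiP_G_eq_0: "PiP Ps G = 0"
proof -
  define Z where "Z = PiP Ps G"
  have Z: "Z \<in> T" "- Z \<in> T"
    unfolding Z_def using PiP_in_tangent[OF Ps_transpose Ps_idempotent transpose_gradH]
    by (auto intro: subspace_neg[OF subspace_tangent])
  have "blinfun_apply (f' Ps) Z = 0"
    using deriv_tangent_nonneg[OF Z(1)] deriv_tangent_nonneg[OF Z(2)] by (simp add: blinfun.minus_right)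
  then have "inner G Z = 0" using inner_G tangent_transpose[OF Z(1)] by simp
  moreover have "inner G Z = inner Z Z"
    unfolding Z_def by (simp add: inner_PiP_left[OF Ps_transpose] PiP_PiP[OF Ps_idempotent])
  ultimately show ?thesis unfolding Z_def by simp
qed

lemma G_commute: "G ** Ps = Ps ** G"
  using PiP_eq_0_imp_commute[OF Ps_idempotent PiP_G_eq_0] .

lemma Hs_eq: "Hs = (\<lambda>A. symm (\<Sum>b\<in>Basis. blinfun_apply (blinfun_apply (f'' Ps) A) b *\<^sub>R b))"
  using hessH_eq[of E f' f'' Ps] E_deriv E_deriv2 by blast

lemma has_derivative_gradH_Ps: "(gradH E has_derivative Hs) (at Ps)"
  unfolding Hs_eq using has_derivative_gradH[of E f' f'' Ps] E_deriv E_deriv2 by blast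

lemma bounded_linear_Hs: "bounded_linear Hs"
  using has_derivative_bounded_linear[OF has_derivative_gradH_Ps] .

lemma transpose_Hs: "transpose (Hs A) = Hs A"
  unfolding Hs_eq by (rule transpose_symm)

lemma inner_Hs: "transpose Y = Y \<Longrightarrow> inner (Hs A) Y = blinfun_apply (blinfun_apply (f'' Ps) A) Y"
  using inner_hessH[of E f' f'' Ps Y A] E_deriv E_deriv2 by blast

lemma Hs_self_adjoint:
  assumes "transpose A = A" "transpose B = B"
  shows "inner (Hs A) B = inner A (Hs B)"
  using inner_Hs[OF assms(1)] inner_Hs[OF assms(2)]
    second_derivative_symmetric[OF E_deriv E_deriv2 E_deriv2_cont, of A B]
  by (simp add: inner_commute)

lemma J_tangent: "X \<in> T \<Longrightarrow> J X = Omega Ps G X + PiP Ps (Hs X)"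
  unfolding Jgrad_def Kop_def by (simp add: PiP_tangent)

lemma bounded_linear_J: "bounded_linear J"
proof -
  have "J = (\<lambda>X. Omega Ps G X + PiP Ps (Hs (PiP Ps X)))"
    unfolding Jgrad_def[abs_def] Kop_def by simp
  then show ?thesis
    by (simp only:) (intro bounded_linear_add bounded_linear_Omega bounded_linear_compose[OF bounded_linear_PiP]
        bounded_linear_compose[OF bounded_linear_Hs] bounded_linear_PiP)
qed

lemma J_in_tangent: "X \<in> T \<Longrightarrow> J X \<in> T"
  unfolding J_tangent
  by (intro subspace_add[OF subspace_tangent] Omega_in_tangent PiP_in_tangent Ps_transpose Ps_idempotent
      transpose_gradH G_commute tangent_transpose transpose_Hs)

lemma J_self_adjoint:
  assumes X: "X \<in> T" and Y: "Y \<in> T"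
  shows "inner (J X) Y = inner X (J Y)"
proof -
  have "inner (PiP Ps (Hs X)) Y = inner (Hs X) Y"
    using inner_PiP_left[OF Ps_transpose] PiP_tangent[OF Y] by metis
  also have "\<dots> = inner X (Hs Y)" using Hs_self_adjoint tangent_transpose X Y by blast
  also have "\<dots> = inner X (PiP Ps (Hs Y))"
    using inner_PiP_left[OF Ps_transpose] PiP_tangent[OF X] by metis
  finally show ?thesis
    unfolding J_tangent[OF X] J_tangent[OF Y]
    using Omega_self_adjoint[OF Ps_transpose Ps_idempotent transpose_gradH X Y]
    by (simp add: inner_add_left inner_add_right)
qed

text \<open>The second-order form of \<open>E\<close> on the manifold at \<open>Ps\<close>: for \<open>P \<in> MN N\<close> and \<open>D = P - Ps\<close>,
  \<open>E P = E Ps + hess_MN D D + o(|D|\<^sup>2)\<close>; the first term is the curvature contribution of the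
  gradient, coming from the normal part of the secant \<open>D\<close>.\<close>

definition hess_MN :: "real^'n^'n \<Rightarrow> real^'n^'n \<Rightarrow> real" where
  "hess_MN Y1 Y2 = inner G ((mat 1 - Ps) ** (Y1 ** Y2) ** (mat 1 - Ps) - Ps ** (Y1 ** Y2) ** Ps)
     + 1/2 * blinfun_apply (blinfun_apply (f'' Ps) Y1) Y2"

lemma bounded_bilinear_hess_MN: "bounded_bilinear hess_MN"
proof -
  have "bilinear hess_MN"
    unfolding bilinear_def linear_iff hess_MN_def
    by (simp add: matrix_mult_simps inner_add_right inner_diff_right blinfun.add_left blinfun.add_right
        blinfun.scaleR_left blinfun.scaleR_right algebra_simps)
  then show ?thesis using bilinear_conv_bounded_bilinear by blast
qed

lemma inner_J_self: "X \<in> T \<Longrightarrow> inner (J X) X = 2 * hess_MN X X"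
  unfolding J_tangent hess_MN_def
  using inner_Omega_self[OF Ps_transpose Ps_idempotent, of X G] inner_PiP_left[OF Ps_transpose, of "Hs X" X]
    PiP_tangent[of X Ps] inner_Hs[OF tangent_transpose, of X Ps X]
  by (simp add: inner_add_left)

lemma taylor_terms_eq_hess_MN:
  assumes "P \<in> MN N"
  shows "blinfun_apply (f' Ps) (P - Ps) + 1/2 * blinfun_apply (blinfun_apply (f'' Ps) (P - Ps)) (P - Ps)
       = hess_MN (P - Ps) (P - Ps)"
proof -
  define D where "D = P - Ps"
  have "blinfun_apply (f' Ps) D = inner G D"
    using inner_G MN_transpose[OF assms] Ps_transpose unfolding D_def by (simp add: transpose_diff)
  also have "\<dots> = inner G (D - PiP Ps D)"
    using inner_PiP_left[OF Ps_transpose, of G D] PiP_G_eq_0 by (simp add: inner_diff_right)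
  also have "D - PiP Ps D = (mat 1 - Ps) ** (D ** D) ** (mat 1 - Ps) - Ps ** (D ** D) ** Ps"
    unfolding D_def by (rule idempotent_secant_normal_part[OF Ps_idempotent MN_idempotent[OF assms]])
  finally show ?thesis unfolding D_def hess_MN_def by simp
qed

text \<open>Second-order optimality, from the nondegeneracy hypothesis along curves through \<open>Ps\<close>.\<close>

lemma hess_MN_coercive:
  assumes X: "X \<in> T"
  shows "\<eta> * (norm X)\<^sup>2 \<le> hess_MN X X"
proof (rule field_le_epsilon)
  fix e :: real assume "e > 0"
  define e' where "e' = e / ((norm X)\<^sup>2 + 1)"
  have e': "e' > 0" "e' * ((norm X)\<^sup>2 + 1) = e"
    unfolding e'_def using \<open>e > 0\<close> add_nonneg_pos[of "(norm X)\<^sup>2" 1] by simp_all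
  define D where "D t = R (Ps + t *\<^sub>R X) - Ps" for t
  obtain r where r: "r > 0" and taylor: "\<And>D. norm D < r \<Longrightarrow> \<bar>E (Ps + D) - E Ps
      - blinfun_apply (f' Ps) D - 1/2 * blinfun_apply (blinfun_apply (f'' Ps) D) D\<bar> \<le> e' * (norm D)\<^sup>2"
    using taylor_second_order_remainder[OF E_deriv E_deriv2 E_deriv2_cont e'(1)] by auto
  have "((\<lambda>t. norm (D t)) \<longlongrightarrow> 0) (at_right 0)"
    using tendsto_norm[OF tangent_curve(3)[OF X]] unfolding D_def by simp
  then have "\<forall>\<^sub>F t in at_right 0. norm (D t) < min \<epsilon> r"
    using eps r by (intro order_tendstoD) auto
  then have "\<forall>\<^sub>F t in at_right 0.
      \<eta> * (norm (D t /\<^sub>R t))\<^sup>2 \<le> hess_MN (D t /\<^sub>R t) (D t /\<^sub>R t) + e' * (norm (D t /\<^sub>R t))\<^sup>2"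
    using tangent_curve(1)[OF X] eventually_at_right_less[of 0]
  proof eventually_elim
    case (elim t)
    have "\<eta> * (norm (D t))\<^sup>2 \<le> E (Ps + D t) - E Ps"
      using nondeg[of "Ps + D t"] elim unfolding D_def by simp
    also have "\<dots> \<le> hess_MN (D t) (D t) + e' * (norm (D t))\<^sup>2"
      using taylor[of "D t"] taylor_terms_eq_hess_MN[of "Ps + D t"] elim unfolding D_def by (simp add: abs_le_iff)
    finally have "\<eta> * (norm (D t))\<^sup>2 / t\<^sup>2 \<le> (hess_MN (D t) (D t) + e' * (norm (D t))\<^sup>2) / t\<^sup>2"
      by (simp add: divide_right_mono)
    then show ?case
      using elim by (simp add: bounded_bilinear.scaleR_left[OF bounded_bilinear_hess_MN]
          bounded_bilinear.scaleR_right[OF bounded_bilinear_hess_MN] power2_eq_square field_simps)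
  qed
  moreover have "((\<lambda>t. hess_MN (D t /\<^sub>R t) (D t /\<^sub>R t) + e' * (norm (D t /\<^sub>R t))\<^sup>2)
      \<longlongrightarrow> hess_MN X X + e' * (norm X)\<^sup>2) (at_right 0)"
    using tangent_curve(2)[OF X] unfolding D_def
    by (intro tendsto_intros bounded_bilinear.tendsto[OF bounded_bilinear_hess_MN])
  moreover have "((\<lambda>t. \<eta> * (norm (D t /\<^sub>R t))\<^sup>2) \<longlongrightarrow> \<eta> * (norm X)\<^sup>2) (at_right 0)"
    using tangent_curve(2)[OF X] unfolding D_def by (intro tendsto_intros)
  ultimately have "\<eta> * (norm X)\<^sup>2 \<le> hess_MN X X + e' * (norm X)\<^sup>2"
    by (intro tendsto_le[of "at_right 0"]) auto
  then show "\<eta> * (norm X)\<^sup>2 \<le> hess_MN X X + e" using e' by (simp add: algebra_simps)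
qed

lemma J_coercive: "X \<in> T \<Longrightarrow> 2 * \<eta> * (norm X)\<^sup>2 \<le> inner (J X) X"
  using hess_MN_coercive inner_J_self by simp

section \<open>Linearization of the iteration\<close>

definition tgrad :: "real^'n^'n \<Rightarrow> real^'n^'n" where
  "tgrad P = PiP P (gradH E P)"

definition tgrad_deriv :: "real^'n^'n \<Rightarrow> real^'n^'n" where
  "tgrad_deriv h = h ** G ** (mat 1 - Ps) - Ps ** G ** h + (mat 1 - Ps) ** G ** h - h ** G ** Ps
     + PiP Ps (Hs h)"

definition gd_step :: "real \<Rightarrow> real^'n^'n \<Rightarrow> real^'n^'n" where
  "gd_step \<beta> P = R (P - \<beta> *\<^sub>R tgrad P)"

abbreviation lin_step :: "real \<Rightarrow> real^'n^'n \<Rightarrow> real^'n^'n" where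
  "lin_step \<beta> X \<equiv> X - \<beta> *\<^sub>R J X"

lemma has_derivative_tgrad: "(tgrad has_derivative tgrad_deriv) (at Ps)"
proof -
  have id: "((\<lambda>P. P) has_derivative (\<lambda>h. h)) (at Ps)" by (rule has_derivative_ident)
  have compl: "((\<lambda>P::real^'n^'n. mat 1 - P) has_derivative (\<lambda>h. - h)) (at Ps)"
    by (auto intro!: derivative_eq_intros)
  note prod = has_derivative_matrix_mult
  have "((\<lambda>P. P ** gradH E P ** (mat 1 - P) + (mat 1 - P) ** gradH E P ** P) has_derivative
      (\<lambda>h. (Ps ** G) ** (- h) + (Ps ** Hs h + h ** G) ** (mat 1 - Ps)
         + (((mat 1 - Ps) ** G) ** h + ((mat 1 - Ps) ** Hs h + (- h) ** G) ** Ps))) (at Ps)"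
    by (intro has_derivative_add prod[OF prod[OF id has_derivative_gradH_Ps] compl]
        prod[OF prod[OF compl has_derivative_gradH_Ps] id])
  moreover have "(\<lambda>h. (Ps ** G) ** (- h) + (Ps ** Hs h + h ** G) ** (mat 1 - Ps)
         + (((mat 1 - Ps) ** G) ** h + ((mat 1 - Ps) ** Hs h + (- h) ** G) ** Ps)) = tgrad_deriv"
    unfolding tgrad_deriv_def PiP_def
    by (rule ext) (simp add: matrix_add_rdistrib matrix_diff_rdistrib matrix_neg_left matrix_neg_right
        matrix_mul_assoc algebra_simps)
  ultimately show ?thesis unfolding tgrad_def[abs_def] PiP_def by simp
qed

lemma bounded_linear_tgrad_deriv: "bounded_linear tgrad_deriv"
  using has_derivative_bounded_linear[OF has_derivative_tgrad] .

lemma tgrad_Ps: "tgrad Ps = 0"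
  unfolding tgrad_def using PiP_G_eq_0 .

lemma tgrad_deriv_tangent: "Y \<in> T \<Longrightarrow> tgrad_deriv Y = J Y"
  unfolding tgrad_deriv_def J_tangent
  by (simp add: Omega_commuting[OF Ps_transpose Ps_idempotent transpose_gradH G_commute])

lemma tgrad_linearization:
  assumes "e > 0"
  shows "\<exists>d>0. \<forall>P. norm (P - Ps) < d \<longrightarrow> norm (tgrad P - tgrad_deriv (P - Ps)) \<le> e * norm (P - Ps)
           \<and> norm (tgrad P) \<le> (onorm tgrad_deriv + e) * norm (P - Ps)"
proof -
  obtain d where "d > 0" and "\<forall>P. norm (P - Ps) < d \<longrightarrow>
      norm (tgrad P - tgrad_deriv (P - Ps)) \<le> e * norm (P - Ps)"
    using has_derivative_tgrad assms unfolding has_derivative_within_alt by (auto simp: tgrad_Ps)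
  moreover have "norm (tgrad P) \<le> (onorm tgrad_deriv + e) * norm (P - Ps)"
    if "norm (tgrad P - tgrad_deriv (P - Ps)) \<le> e * norm (P - Ps)" for P
    using norm_triangle_sub[of "tgrad P" "tgrad_deriv (P - Ps)"] that
      onorm[OF bounded_linear_tgrad_deriv, of "P - Ps"]
    by (simp add: algebra_simps)
  ultimately show ?thesis by blast
qed

lemma gd_step_retraction:
  assumes P: "P \<in> MN N" and small: "\<beta> * norm (tgrad P) < \<delta>R" and "\<beta> \<ge> 0"
  shows "gd_step \<beta> P \<in> MN N \<and> norm (gd_step \<beta> P - (P - \<beta> *\<^sub>R tgrad P)) \<le> CR * (\<beta> * norm (tgrad P))\<^sup>2"
proof -
  have "(- \<beta>) *\<^sub>R tgrad P \<in> Hsym"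
    unfolding tgrad_def Hsym_def
    using transpose_PiP[OF MN_transpose[OF P] transpose_gradH] by (simp add: transpose_scalar transpose_uminus)
  moreover have "PiP P ((- \<beta>) *\<^sub>R tgrad P) = (- \<beta>) *\<^sub>R tgrad P"
    unfolding tgrad_def by (simp add: linear_simps[OF bounded_linear_PiP] PiP_PiP[OF MN_idempotent[OF P]])
  ultimately show ?thesis
    using retraction_tangent[OF P, of "(- \<beta>) *\<^sub>R tgrad P"] small \<open>\<beta> \<ge> 0\<close>
    unfolding gd_step_def by (simp add: power_mult_distrib)
qed

text \<open>The four terms are the retraction error, the normal part of the secant \<open>D\<close>, the
  linearization error of \<open>tgrad\<close>, and \<open>tgrad_deriv\<close> applied to the normal part of \<open>D\<close>.\<close>

lemma gd_step_error:
  assumes P: "P \<in> MN N"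
  defines "D \<equiv> P - Ps"
  shows "gd_step \<beta> P - Ps - lin_step \<beta> (PiP Ps D)
    = (gd_step \<beta> P - (P - \<beta> *\<^sub>R tgrad P)) + (D - PiP Ps D) - \<beta> *\<^sub>R (tgrad P - tgrad_deriv D)
      - \<beta> *\<^sub>R tgrad_deriv (D - PiP Ps D)"
proof -
  have "PiP Ps D \<in> T"
    using PiP_in_tangent[OF Ps_transpose Ps_idempotent] MN_transpose[OF P] Ps_transpose
    unfolding D_def by (simp add: transpose_diff)
  from tgrad_deriv_tangent[OF this] show ?thesis
    unfolding D_def linear_simps(2)[OF bounded_linear_tgrad_deriv] by (simp add: algebra_simps)
qed

lemma gd_step_error_quadratic:
  assumes P: "P \<in> MN N" and \<beta>: "\<beta> > 0" and K: "K \<ge> 0" "\<And>h. norm (tgrad_deriv h) \<le> K * norm h"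
    and normal: "norm ((P - Ps) - PiP Ps (P - Ps)) \<le> c * (norm (P - Ps))\<^sup>2"
    and lin: "norm (tgrad P - tgrad_deriv (P - Ps)) \<le> e * norm (P - Ps)"
    and grad: "norm (tgrad P) \<le> K * norm (P - Ps)" and small: "\<beta> * K * norm (P - Ps) < \<delta>R"
  shows "gd_step \<beta> P \<in> MN N \<and> norm (gd_step \<beta> P - Ps - lin_step \<beta> (PiP Ps (P - Ps)))
           \<le> (CR * (\<beta> * K)\<^sup>2 + c + \<beta> * K * c) * (norm (P - Ps))\<^sup>2 + \<beta> * e * norm (P - Ps)"
proof -
  define D where "D = P - Ps"
  have grad': "\<beta> * norm (tgrad P) \<le> \<beta> * K * norm D"
    using mult_left_mono[OF grad, of \<beta>] \<beta> unfolding D_def by (simp add: mult.assoc)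
  with small have "\<beta> * norm (tgrad P) < \<delta>R" unfolding D_def by linarith
  from gd_step_retraction[OF P this] \<beta> have step: "gd_step \<beta> P \<in> MN N"
    "norm (gd_step \<beta> P - (P - \<beta> *\<^sub>R tgrad P)) \<le> CR * (\<beta> * norm (tgrad P))\<^sup>2"
    by auto
  have "norm (gd_step \<beta> P - Ps - lin_step \<beta> (PiP Ps D))
      \<le> norm (gd_step \<beta> P - (P - \<beta> *\<^sub>R tgrad P)) + norm (D - PiP Ps D)
         + \<beta> * norm (tgrad P - tgrad_deriv D) + \<beta> * norm (tgrad_deriv (D - PiP Ps D))"
    unfolding gd_step_error[OF P, folded D_def] using \<beta>
    by (smt (verit, best) norm_scaleR norm_triangle_ineq norm_triangle_ineq4 abs_of_pos)
  also have "\<dots> \<le> CR * (\<beta> * K * norm D)\<^sup>2 + c * (norm D)\<^sup>2 + \<beta> * (e * norm D)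
      + \<beta> * (K * (c * (norm D)\<^sup>2))"
    using step(2) grad' normal lin K(2)[of "D - PiP Ps D"] CR \<beta> K(1) unfolding D_def
    by (smt (verit, best) mult_left_mono mult_right_mono norm_ge_zero power_mono zero_le_mult_iff)
  also have "\<dots> = (CR * (\<beta> * K)\<^sup>2 + c + \<beta> * K * c) * (norm D)\<^sup>2 + \<beta> * e * norm D"
    by (simp add: power2_eq_square algebra_simps)
  finally show ?thesis using step(1) unfolding D_def by simp
qed

lemma gd_step_linearization:
  assumes \<beta>: "\<beta> > 0" and \<theta>: "\<theta> > 0"
  shows "\<exists>\<rho>>0. \<forall>P\<in>MN N. norm (P - Ps) < \<rho> \<longrightarrow> gd_step \<beta> P \<in> MN N \<and>
     norm (gd_step \<beta> P - Ps - lin_step \<beta> (PiP Ps (P - Ps))) \<le> \<theta> * norm (P - Ps)"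
proof -
  obtain c where c: "c > 0" and normal: "\<And>P. P \<in> MN N \<Longrightarrow>
      norm ((P - Ps) - PiP Ps (P - Ps)) \<le> c * (norm (P - Ps))\<^sup>2"
    using idempotent_secant_normal_part_bound[OF Ps_idempotent] MN_idempotent by blast
  define K where "K = onorm tgrad_deriv + 1"
  have K: "K \<ge> 0" "\<And>h. norm (tgrad_deriv h) \<le> K * norm h"
  proof -
    show "K \<ge> 0" using onorm_pos_le[OF bounded_linear_tgrad_deriv] unfolding K_def by simp
    fix h
    have "norm (tgrad_deriv h) \<le> onorm tgrad_deriv * norm h" by (rule onorm[OF bounded_linear_tgrad_deriv])
    also have "\<dots> \<le> K * norm h" unfolding K_def by (intro mult_right_mono) auto
    finally show "norm (tgrad_deriv h) \<le> K * norm h" .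
  qed
  define e where "e = min 1 (\<theta> / (2 * \<beta>))"
  have e: "e > 0" "e \<le> 1" "\<beta> * e \<le> \<theta> / 2" unfolding e_def using \<beta> \<theta> by (auto simp: field_simps min_def)
  obtain d where "d > 0" and lin: "\<forall>P. norm (P - Ps) < d \<longrightarrow>
      norm (tgrad P - tgrad_deriv (P - Ps)) \<le> e * norm (P - Ps)
      \<and> norm (tgrad P) \<le> (onorm tgrad_deriv + e) * norm (P - Ps)"
    using tgrad_linearization[OF e(1)] by blast
  define M where "M = CR * (\<beta> * K)\<^sup>2 + c + \<beta> * K * c"
  have pos: "\<beta> * K + 1 > 0" "2 * M + 1 > 0"
    using \<beta> K(1) c CR unfolding M_def by (simp_all add: add_nonneg_pos)
  define \<rho> where "\<rho> = min d (min (\<theta> / (2 * M + 1)) (\<delta>R / (\<beta> * K + 1)))"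
  have "\<rho> > 0" unfolding \<rho>_def using \<open>d > 0\<close> \<theta> dR pos by simp
  moreover have "gd_step \<beta> P \<in> MN N \<and>
      norm (gd_step \<beta> P - Ps - lin_step \<beta> (PiP Ps (P - Ps))) \<le> \<theta> * norm (P - Ps)"
    if P: "P \<in> MN N" and near: "norm (P - Ps) < \<rho>" for P
  proof -
    define D where "D = P - Ps"
    have "norm D * (2 * M + 1) < \<theta>" "norm D * (\<beta> * K + 1) < \<delta>R"
      using near pos unfolding D_def \<rho>_def by (simp_all add: pos_less_divide_eq)
    then have D: "2 * M * norm D \<le> \<theta>" "\<beta> * K * norm D < \<delta>R"
      by (simp_all add: algebra_simps) (use norm_ge_zero[of D] in linarith)+
    have "(onorm tgrad_deriv + e) * norm D \<le> K * norm D"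
      unfolding K_def using e(2) by (intro mult_right_mono) auto
    then have "norm (tgrad P - tgrad_deriv D) \<le> e * norm D" "norm (tgrad P) \<le> K * norm D"
      using lin near unfolding D_def \<rho>_def by auto
    from gd_step_error_quadratic[OF P \<beta> K normal[OF P], folded D_def, OF this D(2)]
    have "gd_step \<beta> P \<in> MN N" "norm (gd_step \<beta> P - Ps - lin_step \<beta> (PiP Ps D))
        \<le> M * norm D * norm D + (\<beta> * e) * norm D"
      unfolding M_def by (simp_all add: power2_eq_square mult_ac)
    moreover have "M * norm D * norm D + (\<beta> * e) * norm D \<le> (\<theta> / 2) * norm D + (\<theta> / 2) * norm D"
      using D(1) e(3) by (intro add_mono mult_right_mono) auto
    ultimately show ?thesis unfolding D_def by simp
  qed
  ultimately show ?thesis by blast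
qed

lemma bounded_linear_lin_step: "bounded_linear (lin_step \<beta>)"
  by (intro bounded_linear_sub bounded_linear_ident bounded_linear_compose[OF bounded_linear_scaleR_right]
      bounded_linear_J)

lemma lin_step_in_tangent: "X \<in> T \<Longrightarrow> lin_step \<beta> X \<in> T"
  using J_in_tangent subspace_tangent by (intro subspace_diff subspace_scale) auto

lemma lin_step_self_adjoint: "\<forall>X\<in>T. \<forall>Y\<in>T. inner (lin_step \<beta> X) Y = inner X (lin_step \<beta> Y)"
  using J_self_adjoint by (simp add: inner_diff_left inner_diff_right)

text \<open>An eigenvalue \<open>a\<close> of \<open>1 - \<beta> J\<close> satisfies \<open>a \<le> 1 - 2\<beta>\<eta>\<close> by coercivity of \<open>J\<close>, and \<open>a > 0\<close>
  because \<open>|1 - a| \<le> \<beta> \<parallel>J\<parallel> < 1\<close>.\<close>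

lemma eigenvalue_lin_step:
  assumes \<beta>: "0 < \<beta>" "\<beta> * onorm J < 1" and w: "w \<in> T" "w \<noteq> 0" "lin_step \<beta> w = a *\<^sub>R w"
  shows "0 < a \<and> a \<le> 1 - 2 * \<beta> * \<eta>"
proof -
  have Jw: "\<beta> *\<^sub>R J w = (1 - a) *\<^sub>R w" using w(3) by (simp add: algebra_simps)
  have wn: "norm w > 0" using w(2) by simp
  have "\<beta> * (2 * \<eta> * (norm w)\<^sup>2) \<le> \<beta> * inner (J w) w"
    using J_coercive[OF w(1)] \<beta>(1) by simp
  also have "\<dots> = (1 - a) * (norm w)\<^sup>2"
    using arg_cong[OF Jw, of "\<lambda>v. inner v w"] by (simp add: dot_square_norm)
  finally have "2 * \<beta> * \<eta> \<le> 1 - a" using wn by (simp add: mult_le_cancel_right mult.assoc)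
  moreover have "\<bar>1 - a\<bar> * norm w = \<beta> * norm (J w)" using arg_cong[OF Jw, of norm] \<beta>(1) by simp
  then have "\<bar>1 - a\<bar> * norm w \<le> (\<beta> * onorm J) * norm w"
    using onorm[OF bounded_linear_J, of w] \<beta>(1) by (simp add: mult.assoc mult_left_mono)
  then have "\<bar>1 - a\<bar> \<le> \<beta> * onorm J" using wn by simp
  ultimately show ?thesis using \<beta>(2) by linarith
qed

lemma spec_radius_lin_step_lt_1:
  assumes "0 < \<beta>" "\<beta> * onorm J < 1"
  shows "spec_radius T (lin_step \<beta>) < 1"
proof -
  have "spec_radius T (lin_step \<beta>) \<le> max 0 (1 - 2 * \<beta> * \<eta>)"
    by (rule spec_radius_self_adjoint_le[OF lin_step_self_adjoint])
       (use eigenvalue_lin_step[OF assms] in fastforce)+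
  moreover have "max 0 (1 - 2 * \<beta> * \<eta>) < 1" using assms(1) eta by simp
  ultimately show ?thesis by linarith
qed

lemma gd_step_local_contraction:
  assumes \<beta>: "\<beta> > 0" and \<theta>: "\<theta> > 0"
  shows "\<exists>\<rho>>0. \<forall>P\<in>MN N. norm (P - Ps) < \<rho> \<longrightarrow> gd_step \<beta> P \<in> MN N \<and>
     norm (gd_step \<beta> P - Ps) \<le> (spec_radius T (lin_step \<beta>) + \<theta>) * norm (P - Ps)"
proof -
  define r where "r = spec_radius T (lin_step \<beta>)"
  have r: "r \<ge> 0" unfolding r_def by (rule spec_radius_nonneg[OF bounded_linear_lin_step])
  obtain \<rho> where "\<rho> > 0" and lin: "\<forall>P\<in>MN N. norm (P - Ps) < \<rho> \<longrightarrow> gd_step \<beta> P \<in> MN N \<and>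
      norm (gd_step \<beta> P - Ps - lin_step \<beta> (PiP Ps (P - Ps))) \<le> \<theta> * norm (P - Ps)"
    using gd_step_linearization[OF \<beta> \<theta>] by blast
  moreover have "norm (gd_step \<beta> P - Ps) \<le> (r + \<theta>) * norm (P - Ps)"
    if P: "P \<in> MN N" "norm (P - Ps) < \<rho>" for P
  proof -
    have D: "PiP Ps (P - Ps) \<in> T"
      using PiP_in_tangent[OF Ps_transpose Ps_idempotent] MN_transpose[OF P(1)] Ps_transpose
      by (simp add: transpose_diff)
    have "norm (lin_step \<beta> (PiP Ps (P - Ps))) \<le> r * norm (PiP Ps (P - Ps))"
      unfolding r_def by (rule norm_le_spec_radius[OF bounded_linear_lin_step subspace_tangent
          lin_step_in_tangent lin_step_self_adjoint D])
    also have "\<dots> \<le> r * norm (P - Ps)"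
      using norm_PiP_le[OF Ps_transpose Ps_idempotent] r by (rule mult_left_mono)
    finally show ?thesis
      using lin P norm_triangle_sub[of "gd_step \<beta> P - Ps" "lin_step \<beta> (PiP Ps (P - Ps))"]
      by (auto simp: algebra_simps)
  qed
  ultimately show ?thesis unfolding r_def by blast
qed

theorem gd_step_linear_convergence:
  "\<exists>\<beta>0>0. \<forall>\<beta>. 0 < \<beta> \<and> \<beta> < \<beta>0 \<longrightarrow>
     spec_radius T (lin_step \<beta>) < 1 \<and>
     (\<exists>\<delta>>0. \<forall>\<theta>>0. \<exists>C>0. \<forall>P0\<in>MN N. norm (P0 - Ps) < \<delta> \<longrightarrow>
        (\<forall>k. norm ((gd_step \<beta> ^^ k) P0 - Ps) \<le> C * (spec_radius T (lin_step \<beta>) + \<theta>) ^ k * norm (P0 - Ps)))"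
proof -
  have J: "onorm J \<ge> 0" by (rule onorm_pos_le[OF bounded_linear_J])
  have "spec_radius T (lin_step \<beta>) < 1 \<and>
     (\<exists>\<delta>>0. \<forall>\<theta>>0. \<exists>C>0. \<forall>P0\<in>MN N. norm (P0 - Ps) < \<delta> \<longrightarrow>
        (\<forall>k. norm ((gd_step \<beta> ^^ k) P0 - Ps) \<le> C * (spec_radius T (lin_step \<beta>) + \<theta>) ^ k * norm (P0 - Ps)))"
    if \<beta>: "0 < \<beta>" "\<beta> < 1 / (onorm J + 1)" for \<beta>
  proof -
    have "\<beta> * onorm J < 1" using \<beta> J by (simp add: field_simps)
    with \<beta>(1) have r: "spec_radius T (lin_step \<beta>) < 1" by (rule spec_radius_lin_step_lt_1)
    with local_contraction_linear_convergence[OF spec_radius_nonneg[OF bounded_linear_lin_step] r]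
      gd_step_local_contraction[OF \<beta>(1)]
    show ?thesis by blast
  qed
  moreover have "1 / (onorm J + 1) > 0" using J by simp
  ultimately show ?thesis by blast
qed

end

theorem theorem3p2:
  fixes E :: "real^'n^'n \<Rightarrow> real"
    and R :: "real^'n^'n \<Rightarrow> real^'n^'n"
    and Ps :: "real^'n^'n"
    and N :: nat
  assumes N: "1 \<le> N" "N \<le> CARD('n)"
    and E_C2: "C2 E"
    and Ps_in: "Ps \<in> MN N"
    and nondeg: "\<exists>\<eta>>0. \<exists>\<epsilon>>0. \<forall>P\<in>MN N. norm (P - Ps) < \<epsilon> \<longrightarrow>
                    E P \<ge> E Ps + \<eta> * (norm (P - Ps))\<^sup>2"
    and R_C2: "C2 R"
    and R_H: "\<forall>X\<in>Hsym. R X \<in> Hsym"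
    and R_retr: "\<exists>\<delta>>0. \<exists>C. \<forall>P\<in>MN N. \<forall>X\<in>Hsym. norm X < \<delta> \<longrightarrow>
                    R (P + X) \<in> MN N \<and>
                    norm (R (P + X) - (P + PiP P X)) \<le> C * (norm X)\<^sup>2"
  shows "\<exists>\<beta>0>0. \<forall>\<beta>. 0 < \<beta> \<and> \<beta> < \<beta>0 \<longrightarrow>
           spec_radius (tangent Ps) (\<lambda>X. X - \<beta> *\<^sub>R Jgrad E Ps X) < 1 \<and>
           (\<exists>\<delta>>0. \<forall>\<theta>>0. \<exists>C>0. \<forall>P0\<in>MN N. norm (P0 - Ps) < \<delta> \<longrightarrow>
              (\<forall>k. norm (((\<lambda>P. R (P - \<beta> *\<^sub>R PiP P (gradH E P))) ^^ k) P0 - Ps)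
                   \<le> C * (spec_radius (tangent Ps) (\<lambda>X. X - \<beta> *\<^sub>R Jgrad E Ps X) + \<theta>) ^ k
                       * norm (P0 - Ps)))"
proof -
  obtain f' f'' where E': "\<And>x. (E has_derivative blinfun_apply (f' x)) (at x)"
    and E'': "\<And>x. (f' has_derivative blinfun_apply (f'' x)) (at x)" and "continuous_on UNIV f''"
    using E_C2 unfolding C2_def by blast
  then have cont: "isCont f'' Ps" by (simp add: continuous_on_eq_continuous_at)
  obtain \<eta> \<epsilon> where eta: "\<eta> > 0" and eps: "\<epsilon> > 0"
    and growth: "\<And>P. P \<in> MN N \<Longrightarrow> norm (P - Ps) < \<epsilon> \<Longrightarrow> E P \<ge> E Ps + \<eta> * (norm (P - Ps))\<^sup>2"
    using nondeg by blast
  obtain \<delta>R C where dR: "\<delta>R > 0" and retr: "\<And>P X. P \<in> MN N \<Longrightarrow> X \<in> Hsym \<Longrightarrow> norm X < \<delta>R \<Longrightarrow>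
      R (P + X) \<in> MN N \<and> norm (R (P + X) - (P + PiP P X)) \<le> C * (norm X)\<^sup>2"
    using R_retr by blast
  have "R (P + X) \<in> MN N \<and> norm (R (P + X) - (P + PiP P X)) \<le> \<bar>C\<bar> * (norm X)\<^sup>2"
    if "P \<in> MN N" "X \<in> Hsym" "norm X < \<delta>R" for P X
    using retr[OF that] mult_right_mono[OF abs_ge_self, of "(norm X)\<^sup>2" C] by auto
  then interpret minimizer_with_retraction E f' f'' R Ps N \<eta> \<epsilon> \<delta>R "\<bar>C\<bar>"
    by unfold_locales (use E' E'' cont Ps_in eta eps growth dR in auto)
  have "gd_step \<beta> = (\<lambda>P. R (P - \<beta> *\<^sub>R PiP P (gradH E P)))" for \<beta>
    by (simp add: fun_eq_iff gd_step_def tgrad_def)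
  with gd_step_linear_convergence show ?thesis by simp
qed

end
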